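(* Let $M\in\mathrm{M}_n(\mathbb{K})$ and let $\mathbb{K}^n=V_1\oplus\cdots\oplus V_t$ where each $V_i$ is a $\mathbb{K}$-subspace with $V_iM^t\subseteq V_i$ such that the endomorphism $v\mapsto vM^t$ of $V_i$ is cyclic with minimal polynomial $\Theta_i\in\mathbb{K}[x]$; put $d_i=\deg\Theta_i$. Let $P\in\mathbb{L}[x]$ and $\mathcal{C}=\ker(P(M))=\{c\in\mathbb{L}^n : cP(M)^t=0\}$. For each $i$ let $\mathcal{C}_i\subseteq\mathbb{L}^{d_i}$ be the $\Theta_i$-polynomial code with generator polynomial $\Theta_i/\gcd(P,\Theta_i)$, and let $\Lambda=\{i : \gcd(P,\Theta_i)\neq1\}$ (gcd taken monic in $\mathbb{L}[x]$). Then: $k_i:=\dim_{\mathbb{L}}\mathcal{C}_i=\deg\gcd(P,\Theta_i)$ for all $i$, and $M_{r_i}(\mathcal{C}_i)\le\deg(\Theta_i)-\deg\gcd(P,\Theta_i)+r_i$ for all $r_i\in\{1,\dots,k_i\}$; $k:=\dim_{\mathbb{L}}\mathcal{C}=\sum_{i\in\Lambda}\deg\gcd(P,\Theta_i)$; and for all $r\in\{1,\dots,k\}$, $$M_r(\mathcal{C})=\min_{\substack{\sum_{i\in\Lambda}r_i=r\\ r_i\in\{0,\dots,k_i\}}}\sum_{i\in\Lambda}M_{r_i}(\mathcal{C}_i)\le\min_{\substack{\sum_{i\in\Lambda}r_i=r\\ r_i\in\{0,\dots,k_i\}}}\Big(\sum_{i\in\Lambda,\ r_i\neq0}(\deg\Theta_i-\deg\gcd(P,\Theta_i))\Big)+r.$$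 In particular $M_1(\mathcal{C})=\min_{i\in\Lambda}M_1(\mathcal{C}_i)$ and $M_k(\mathcal{C})=\sum_{i\in\Lambda}M_{k_i}(\mathcal{C}_i)\le\sum_{i\in\Lambda}\deg\Theta_i$.
   Context: Let $\mathbb{L}/\mathbb{K}$ be a field extension of finite degree $m$, and $n\ge 1$ an integer with $m\ge n$ (standing assumption). Vectors are row vectors. Fix a $\mathbb{K}$-basis $\mathcal{B}$ of $\mathbb{L}$; for $c=(c_1,\dots,c_n)\in\mathbb{L}^n$ let $M_{\mathcal{B}}(c)$ be the $m\times n$ matrix over $\mathbb{K}$ whose $j$-th column is the coordinate vector of $c_j$ in $\mathcal{B}$; $\mathrm{Rsupp}(c)\subseteq\mathbb{K}^n$ is its $\mathbb{K}$-row space and $\mathrm{wt}_R(c)=\dim_{\mathbb{K}}\mathrm{Rsupp}(c)$. For an $\mathbb{L}$-subspace $\mathcal{D}$, $\mathrm{Rsupp}(\mathcal{D})$ is the $\mathbb{K}$-span of all $\mathrm{Rsupp}(d)$, $d\in\mathcal{D}$, and $\mathrm{wt}_R(\mathcal{D})=\dim_{\mathbb{K}}\mathrm{Rsupp}(\mathcal{D})$. A linear $[n,k]$ code is a $k$-dimensional $\mathbb{L}$-subspace $\mathcal{C}\subseteq\mathbb{L}^n$; $M_r(\mathcal{C})=\min\{\mathrm{wt}_R(\mathcal{D}):\mathcal{D}\subseteq\mathcal{C},\dim_{\mathbb{L}}\mathcal{D}=r\}$ for $1\le r\le k$, and $M_0(\mathcal{C})=0$. An endomorphism $u$ of a vector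 space $V$ of dimension $d$ is cyclic if there is $v$ with $(v,u(v),\dots,u^{d-1}(v))$ a basis. For a monic $\Theta=x^d+a_{d-1}x^{d-1}+\dots+a_0\in\mathbb{K}[x]$, its companion matrix $C_\Theta\in\mathrm{M}_d(\mathbb{K})$ has ones on the subdiagonal, last column $(-a_0,\dots,-a_{d-1})^t$, and zeros elsewhere. The $\Theta$-polynomial code with generator polynomial $g$ (a monic divisor of $\Theta$ in $\mathbb{L}[x]$) is $\{w\,g(C_\Theta)^tQ(C_\Theta)^t : Q\in\mathbb{L}[x]\}\subseteq\mathbb{L}^d$ with $w=(1,0,\dots,0)$; equivalently, the set of coefficient vectors $(b_0,\dots,b_{d-1})$ of the polynomials of degree $<d$ representing elements of the ideal $(\bar g)$ of $\mathbb{L}[x]/(\Theta)$. *)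

theory Defs
  imports Main "HOL-Library.Function_Algebras" "HOL-Computational_Algebra.Polynomial_Factorial" "HOL-Computational_Algebra.Euclidean_Algorithm"
begin

text \<open>Vectors of length n over a field are functions nat => 'a vanishing from index n on;
  n x n matrices are functions nat => nat => 'a (only entries below n matter).\<close>

definition vecs :: "nat \<Rightarrow> (nat \<Rightarrow> 'a::zero) set" where
  "vecs n = {v. \<forall>j\<ge>n. v j = 0}"

definition sc :: "'a::field \<Rightarrow> (nat \<Rightarrow> 'a) \<Rightarrow> (nat \<Rightarrow> 'a)" where
  "sc a v = (\<lambda>j. a * v j)"

definition scK :: "('k \<Rightarrow> 'l::field) \<Rightarrow> 'k \<Rightarrow> (nat \<Rightarrow> 'l) \<Rightarrow> (nat \<Rightarrow> 'l)" where
  "scK emb a v = (\<lambda>j. emb a * v j)"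

text \<open>emb : K -> L is a field embedding (K is then identified with a subfield of L).\<close>
definition field_emb :: "('k::field \<Rightarrow> 'l::field) \<Rightarrow> bool" where
  "field_emb emb \<longleftrightarrow> (\<forall>a b. emb (a + b) = emb a + emb b) \<and> (\<forall>a b. emb (a * b) = emb a * emb b)
      \<and> emb 1 = 1"

definition is_K_basis :: "('k::field \<Rightarrow> 'l::field) \<Rightarrow> (nat \<Rightarrow> 'l) \<Rightarrow> nat \<Rightarrow> bool" where
  "is_K_basis emb b m \<longleftrightarrow>
     (\<forall>x. \<exists>!a. (\<forall>j\<ge>m. a j = 0) \<and> x = (\<Sum>j<m. emb (a j) * b j))"

definition coord :: "('k::field \<Rightarrow> 'l::field) \<Rightarrow> (nat \<Rightarrow> 'l) \<Rightarrow> nat \<Rightarrow> 'l \<Rightarrow> nat \<Rightarrow> 'k" where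
  "coord emb b m x = (THE a. (\<forall>j\<ge>m. a j = 0) \<and> x = (\<Sum>j<m. emb (a j) * b j))"

text \<open>Rsupp(c) for c in L^n: the K-row space of the m x n matrix M_B(c), whose (j,l) entry is the
  j-th coordinate of c_l.\<close>
definition Rsupp :: "('k::field \<Rightarrow> 'l::field) \<Rightarrow> (nat \<Rightarrow> 'l) \<Rightarrow> nat \<Rightarrow> nat \<Rightarrow> (nat \<Rightarrow> 'l) \<Rightarrow> (nat \<Rightarrow> 'k) set" where
  "Rsupp emb b m n c = module.span sc
     {(\<lambda>l. if l < n then coord emb b m (c l) j else 0) | j. j < m}"

definition wtR :: "('k::field \<Rightarrow> 'l::field) \<Rightarrow> (nat \<Rightarrow> 'l) \<Rightarrow> nat \<Rightarrow> nat \<Rightarrow> (nat \<Rightarrow> 'l) \<Rightarrow> nat" where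
  "wtR emb b m n c = vector_space.dim (sc :: 'k \<Rightarrow> _) (Rsupp emb b m n c)"

definition Rsupp_sp :: "('k::field \<Rightarrow> 'l::field) \<Rightarrow> (nat \<Rightarrow> 'l) \<Rightarrow> nat \<Rightarrow> nat \<Rightarrow> (nat \<Rightarrow> 'l) set \<Rightarrow> (nat \<Rightarrow> 'k) set" where
  "Rsupp_sp emb b m n D = module.span sc (\<Union>d\<in>D. Rsupp emb b m n d)"

definition wtR_sp :: "('k::field \<Rightarrow> 'l::field) \<Rightarrow> (nat \<Rightarrow> 'l) \<Rightarrow> nat \<Rightarrow> nat \<Rightarrow> (nat \<Rightarrow> 'l) set \<Rightarrow> nat" where
  "wtR_sp emb b m n D = vector_space.dim (sc :: 'k \<Rightarrow> _) (Rsupp_sp emb b m n D)"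

definition Mr :: "('k::field \<Rightarrow> 'l::field) \<Rightarrow> (nat \<Rightarrow> 'l) \<Rightarrow> nat \<Rightarrow> nat \<Rightarrow> (nat \<Rightarrow> 'l) set \<Rightarrow> nat \<Rightarrow> nat" where
  "Mr emb b m n C r = (if r = 0 then 0 else
     Min {wtR_sp emb b m n D | D. module.subspace (sc :: 'l \<Rightarrow> _) D \<and> D \<subseteq> C
                                   \<and> vector_space.dim (sc :: 'l \<Rightarrow> _) D = r})"

definition mat_mult :: "nat \<Rightarrow> (nat \<Rightarrow> nat \<Rightarrow> 'a::comm_ring_1) \<Rightarrow> (nat \<Rightarrow> nat \<Rightarrow> 'a) \<Rightarrow> nat \<Rightarrow> nat \<Rightarrow> 'a" where
  "mat_mult n A B = (\<lambda>i j. \<Sum>k<n. A i k * B k j)"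

definition mat_id :: "nat \<Rightarrow> nat \<Rightarrow> 'a::comm_ring_1" where
  "mat_id = (\<lambda>i j. if i = j then 1 else 0)"

primrec mat_pow :: "nat \<Rightarrow> (nat \<Rightarrow> nat \<Rightarrow> 'a::comm_ring_1) \<Rightarrow> nat \<Rightarrow> nat \<Rightarrow> nat \<Rightarrow> 'a" where
  "mat_pow n A 0 = mat_id"
| "mat_pow n A (Suc k) = mat_mult n (mat_pow n A k) A"

definition poly_mat :: "nat \<Rightarrow> 'a::comm_ring_1 poly \<Rightarrow> (nat \<Rightarrow> nat \<Rightarrow> 'a) \<Rightarrow> nat \<Rightarrow> nat \<Rightarrow> 'a" where
  "poly_mat n p A = (\<lambda>i j. \<Sum>k\<le>degree p. coeff p k * mat_pow n A k i j)"

definition vecmatT :: "nat \<Rightarrow> (nat \<Rightarrow> 'a::comm_ring_1) \<Rightarrow> (nat \<Rightarrow> nat \<Rightarrow> 'a) \<Rightarrow> nat \<Rightarrow> 'a" where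
  "vecmatT n v A = (\<lambda>j. if j < n then \<Sum>l<n. v l * A j l else 0)"

definition poly_endo :: "'a::field poly \<Rightarrow> ((nat \<Rightarrow> 'a) \<Rightarrow> (nat \<Rightarrow> 'a)) \<Rightarrow> (nat \<Rightarrow> 'a) \<Rightarrow> nat \<Rightarrow> 'a" where
  "poly_endo q u v = (\<Sum>k\<le>degree q. sc (coeff q k) ((u ^^ k) v))"

definition cyclic_endo :: "(nat \<Rightarrow> 'a::field) set \<Rightarrow> ((nat \<Rightarrow> 'a) \<Rightarrow> (nat \<Rightarrow> 'a)) \<Rightarrow> bool" where
  "cyclic_endo V u \<longleftrightarrow> module.subspace sc V \<and> u ` V \<subseteq> V \<and>
     (\<exists>v\<in>V. let d = vector_space.dim sc V in
        inj_on (\<lambda>j. (u ^^ j) v) {..<d}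
        \<and> \<not> module.dependent sc ((\<lambda>j. (u ^^ j) v) ` {..<d})
        \<and> module.span sc ((\<lambda>j. (u ^^ j) v) ` {..<d}) = V)"

definition is_min_poly :: "(nat \<Rightarrow> 'a::field) set \<Rightarrow> ((nat \<Rightarrow> 'a) \<Rightarrow> (nat \<Rightarrow> 'a)) \<Rightarrow> 'a poly \<Rightarrow> bool" where
  "is_min_poly V u \<Theta> \<longleftrightarrow> lead_coeff \<Theta> = 1 \<and> (\<forall>v\<in>V. poly_endo \<Theta> u v = 0) \<and>
     (\<forall>q. (\<forall>v\<in>V. poly_endo q u v = 0) \<longrightarrow> \<Theta> dvd q)"

text \<open>The Theta-polynomial code of length deg Theta with generator g: coefficient vectors of the
  reduced representatives of elements of the ideal (g) of L[x]/(Theta).\<close>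
definition poly_code :: "'l::field poly \<Rightarrow> 'l poly \<Rightarrow> (nat \<Rightarrow> 'l) set" where
  "poly_code \<Theta> g = {(\<lambda>j. coeff ((g * Q) mod \<Theta>) j) | Q. True}"

definition compositions :: "nat set \<Rightarrow> (nat \<Rightarrow> nat) \<Rightarrow> nat \<Rightarrow> (nat \<Rightarrow> nat) set" where
  "compositions \<Lambda> kk r = {rr. (\<forall>i. i \<notin> \<Lambda> \<longrightarrow> rr i = 0) \<and> (\<forall>i\<in>\<Lambda>. rr i \<le> kk i)
                                \<and> (\<Sum>i\<in>\<Lambda>. rr i) = r}"

end

theory Submission
  imports Defs "HOL-Library.Set_Algebras"
begin

(* Choose a generator w_i of each cyclic block V_i. The K-matrix with columns
   w_i, w_i M^t, w_i (M^t)^2, ... sends the coefficient vector of a polynomial a to a(M) w_i;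
   over L it is injective and turns the action of P(M) into multiplication by P modulo Theta_i.
   Hence it maps the Theta_i-polynomial code C_i onto the part of C lying in block i, and C is
   the direct sum of these images.  Being defined over K, these maps preserve rank supports,
   so each image has the generalized weights of C_i.

   The K-coordinate rows of a codeword of block i lie in V_i, and the V_i are independent.
   For a subcode D of A + B (A, B two such pieces) the projection onto B along A therefore
   matches the projection of coordinate rows onto V_B along V_A, and rank-nullity applied to
   D and to its row space splits both the dimension and the rank weight of D.  Induction over
   the blocks gives M_r(C) as a minimum over compositions of r.  The bound on M_r(C_i) comes
   from the r-dimensional subcode of multiples of Theta_i / gcd(P, Theta_i) of degree below
   deg(Theta_i) - deg gcd(P, Theta_i) + r, which is supported on that many coordinates. *)

section \<open>Finitely spanned subsets of a vector space\<close>

definition linear_on :: "('a::field \<Rightarrow> 'b::ab_group_add \<Rightarrow> 'b) \<Rightarrow> 'b set \<Rightarrow> ('b \<Rightarrow> 'b) \<Rightarrow> bool" where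
  "linear_on s S f \<longleftrightarrow>
     (\<forall>x\<in>S. \<forall>y\<in>S. f (x + y) = f x + f y) \<and> (\<forall>c. \<forall>x\<in>S. f (s c x) = s c (f x))"

text \<open>The projection onto \<open>Y\<close> along \<open>X\<close>; meaningful on \<open>X + Y\<close> when \<open>X \<inter> Y = {0}\<close>.\<close>

definition proj_along :: "'b::ab_group_add set \<Rightarrow> 'b set \<Rightarrow> 'b \<Rightarrow> 'b" where
  "proj_along X Y v = (THE y. y \<in> Y \<and> v - y \<in> X)"

definition finitely_spanned :: "('a::field \<Rightarrow> 'b::ab_group_add \<Rightarrow> 'b) \<Rightarrow> 'b set \<Rightarrow> bool" where
  "finitely_spanned s S \<longleftrightarrow> (\<exists>W. finite W \<and> S \<subseteq> module.span s W)"

context vector_space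
begin

lemma finitely_spanned_subset: "finitely_spanned scale T \<Longrightarrow> S \<subseteq> T \<Longrightarrow> finitely_spanned scale S"
  unfolding finitely_spanned_def by blast

lemma finitely_spanned_span: "finitely_spanned scale S \<Longrightarrow> finitely_spanned scale (span S)"
  unfolding finitely_spanned_def by (metis span_minimal subspace_span)

lemma finitely_spanned_basis:
  assumes "finitely_spanned scale S"
  obtains B where "B \<subseteq> S" "independent B" "S \<subseteq> span B" "finite B" "card B = dim S"
proof -
  obtain B where B: "B \<subseteq> S" "independent B" "S \<subseteq> span B" "card B = dim S"
    by (rule basis_exists)
  from assms obtain W where W: "finite W" "S \<subseteq> span W" by (auto simp: finitely_spanned_def)
  have "finite B" using independent_span_bound[OF W(1) B(2)] B(1) W(2) by auto
  with B that show ?thesis by blast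
qed

lemma dim_mono_finitely_spanned:
  assumes "finitely_spanned scale T" "S \<subseteq> T"
  shows "dim S \<le> dim T"
proof -
  obtain B where B: "B \<subseteq> S" "independent B" "S \<subseteq> span B" "card B = dim S"
    by (rule basis_exists)
  obtain B' where B': "B \<subseteq> B'" "B' \<subseteq> T" "independent B'" "T \<subseteq> span B'"
    using maximal_independent_subset_extend[of B T, OF _ B(2)] B(1) assms(2) by blast
  from assms obtain W where W: "finite W" "T \<subseteq> span W" by (auto simp: finitely_spanned_def)
  have "finite B'" using independent_span_bound[OF W(1) B'(3)] B'(2) W(2) by auto
  then have "card B \<le> card B'" using B'(1) card_mono by blast
  moreover have "card B' = dim T" using basis_card_eq_dim B' by auto
  ultimately show ?thesis using B by simp
qed

lemma set_plus_subset_span: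
  assumes "S \<subseteq> span A" "T \<subseteq> span B"
  shows "S + T \<subseteq> span (A \<union> B)"
proof
  fix x assume "x \<in> S + T"
  then obtain a c where "x = a + c" "a \<in> span A" "c \<in> span B"
    using assms by (auto elim!: set_plus_elim)
  then show "x \<in> span (A \<union> B)"
    using span_mono[of A "A \<union> B"] span_mono[of B "A \<union> B"] by (auto intro: span_add)
qed

lemma finitely_spanned_set_plus:
  assumes "finitely_spanned scale S" "finitely_spanned scale T"
  shows "finitely_spanned scale (S + T)"
proof -
  obtain W1 W2 where "finite W1" "S \<subseteq> span W1" "finite W2" "T \<subseteq> span W2"
    using assms by (auto simp: finitely_spanned_def)
  then show ?thesis
    unfolding finitely_spanned_def using set_plus_subset_span by (meson finite_UnI)
qed

lemma subspace_set_plus: "subspace S \<Longrightarrow> subspace T \<Longrightarrow> subspace (S + T)"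
proof -
  have "S + T = {x + y |x y. x \<in> S \<and> y \<in> T}" by (auto simp: set_plus_def)
  then show "subspace S \<Longrightarrow> subspace T \<Longrightarrow> subspace (S + T)" using subspace_sums by simp
qed

lemma dim_set_plus_le:
  assumes "finitely_spanned scale S" "finitely_spanned scale T"
  shows "dim (S + T) \<le> dim S + dim T"
proof -
  obtain B1 where B1: "B1 \<subseteq> S" "independent B1" "S \<subseteq> span B1" "finite B1" "card B1 = dim S"
    by (rule finitely_spanned_basis[OF assms(1)])
  obtain B2 where B2: "B2 \<subseteq> T" "independent B2" "T \<subseteq> span B2" "finite B2" "card B2 = dim T"
    by (rule finitely_spanned_basis[OF assms(2)])
  have "dim (S + T) \<le> card (B1 \<union> B2)"
    by (rule dim_le_card[OF set_plus_subset_span[OF B1(3) B2(3)]]) (use B1(4) B2(4) in simp)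
  also have "\<dots> \<le> card B1 + card B2" by (rule card_Un_le)
  finally show ?thesis using B1(5) B2(5) by simp
qed

lemma subspace_of_dim_exists:
  assumes "subspace S" "finitely_spanned scale S" "r \<le> dim S"
  shows "\<exists>D. subspace D \<and> D \<subseteq> S \<and> dim D = r"
proof -
  obtain B where B: "B \<subseteq> S" "independent B" "S \<subseteq> span B" "finite B" "card B = dim S"
    by (rule finitely_spanned_basis[OF assms(2)])
  have "r \<le> card B" using assms(3) B(5) by simp
  then obtain B' where B': "B' \<subseteq> B" "card B' = r" "finite B'"
    by (rule obtain_subset_with_card_n)
  have "dim (span B') = r"
    using dim_span_eq_card_independent[OF independent_mono[OF B(2) B'(1)]] B'(2) by simp
  moreover have "span B' \<subseteq> S" by (rule span_minimal) (use B'(1) B(1) assms(1) in auto)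
  ultimately show ?thesis using subspace_span by blast
qed

lemma linear_on_zero:
  assumes "subspace S" "linear_on scale S f"
  shows "f 0 = 0"
proof -
  have "f (0 *s 0) = 0 *s f 0" using assms subspace_0 unfolding linear_on_def by blast
  then show ?thesis by simp
qed

lemma linear_on_sum:
  assumes "subspace S" "linear_on scale S f" "finite I" "\<forall>i\<in>I. v i \<in> S"
  shows "f (\<Sum>i\<in>I. v i) = (\<Sum>i\<in>I. f (v i))"
  using assms(3,4)
proof (induction I rule: finite_induct)
  case empty then show ?case using linear_on_zero[OF assms(1,2)] by simp
next
  case (insert x F)
  have "sum v F \<in> S" using insert(4) by (intro subspace_sum[OF assms(1)]) auto
  then show ?case using insert assms(2) unfolding linear_on_def by simp
qed

lemma subspace_linear_on_image:
  assumes "subspace S" "linear_on scale S f"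
  shows "subspace (f ` S)"
  unfolding subspace_def
proof (intro conjI ballI allI)
  show "0 \<in> f ` S" using linear_on_zero[OF assms] subspace_0[OF assms(1)] by force
  fix x y assume "x \<in> f ` S" "y \<in> f ` S"
  then obtain x' y' where "x' \<in> S" "y' \<in> S" "x = f x'" "y = f y'" by blast
  then have "x + y = f (x' + y')" "x' + y' \<in> S"
    using assms subspace_add unfolding linear_on_def by auto
  then show "x + y \<in> f ` S" by blast
next
  fix c x assume "x \<in> f ` S"
  then obtain x' where "x' \<in> S" "x = f x'" by blast
  then have "c *s x = f (c *s x')" "c *s x' \<in> S"
    using assms subspace_scale unfolding linear_on_def by auto
  then show "c *s x \<in> f ` S" by blast
qed

lemma linear_on_kernel_complement_independent:
  assumes S: "subspace S" and f: "linear_on scale S f"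
    and B: "B0 \<subseteq> B" "B \<subseteq> S" "finite B" "independent B"
    and K: "{x\<in>S. f x = 0} \<subseteq> span B0"
    and g: "(\<Sum>b\<in>B - B0. g b *s f b) = 0"
  shows "\<forall>b\<in>B - B0. g b = 0"
proof -
  let ?v = "\<Sum>b\<in>B - B0. g b *s b"
  have finB0: "finite B0" using B(1,3) finite_subset by blast
  have vS: "?v \<in> S" using B(2) S by (auto intro!: subspace_sum subspace_scale)
  have "f ?v = (\<Sum>b\<in>B - B0. f (g b *s b))"
    using linear_on_sum[OF S f, of "B - B0" "\<lambda>b. g b *s b"] B S by (auto intro: subspace_scale)
  also have "\<dots> = (\<Sum>b\<in>B - B0. g b *s f b)"
    using f B(2) unfolding linear_on_def by (auto intro!: sum.cong)
  finally have "?v \<in> span B0" using vS g K by auto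
  then obtain h where h: "?v = (\<Sum>b\<in>B0. h b *s b)"
    using span_finite[OF finB0] by auto
  define c where "c b = (if b \<in> B0 then - h b else g b)" for b
  have "(\<Sum>b\<in>B. c b *s b) = (\<Sum>b\<in>B - B0. c b *s b) + (\<Sum>b\<in>B0. c b *s b)"
    by (rule sum.subset_diff[OF B(1,3)])
  also have "(\<Sum>b\<in>B - B0. c b *s b) = ?v" by (auto simp: c_def intro!: sum.cong)
  also have "(\<Sum>b\<in>B0. c b *s b) = - (\<Sum>b\<in>B0. h b *s b)"
    by (simp add: c_def sum_negf)
  finally have "(\<Sum>b\<in>B. c b *s b) = 0" using h by simp
  then have "\<forall>b\<in>B. c b = 0" using independentD[OF B(4,3) order_refl] by blast
  then show ?thesis by (auto simp: c_def)
qed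

lemma linear_on_kernel_complement_image_independent:
  assumes S: "subspace S" and f: "linear_on scale S f"
    and B: "B0 \<subseteq> B" "B \<subseteq> S" "finite B" "independent B"
    and K: "{x\<in>S. f x = 0} \<subseteq> span B0"
  shows "inj_on f (B - B0)" and "independent (f ` (B - B0))"
proof -
  note key = linear_on_kernel_complement_independent[OF S f B K]
  show inj: "inj_on f (B - B0)"
  proof (rule inj_onI, rule ccontr)
    fix x y assume xy: "x \<in> B - B0" "y \<in> B - B0" "f x = f y" "x \<noteq> y"
    define g :: "'b \<Rightarrow> 'a" where "g b = (if b = x then 1 else 0) - (if b = y then 1 else 0)" for b
    have "(\<Sum>b\<in>B - B0. g b *s f b)
        = (\<Sum>b\<in>B - B0. (if b = x then f b else 0) - (if b = y then f b else 0))"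
      by (intro sum.cong) (auto simp: g_def scale_left_diff_distrib)
    also have "\<dots> = (\<Sum>b\<in>B - B0. if b = x then f b else 0) - (\<Sum>b\<in>B - B0. if b = y then f b else 0)"
      by (rule sum_subtractf)
    also have "\<dots> = 0" using xy B(3) by (simp add: sum.delta)
    finally have "(\<Sum>b\<in>B - B0. g b *s f b) = 0" .
    then have "g x = 0" using key xy by simp
    then show False using xy(4) by (simp add: g_def)
  qed
  show "independent (f ` (B - B0))"
  proof (rule independent_if_scalars_zero)
    show "finite (f ` (B - B0))" using B(3) by simp
    fix c y assume s: "(\<Sum>x\<in>f ` (B - B0). c x *s x) = 0" and y: "y \<in> f ` (B - B0)"
    have "(\<Sum>b\<in>B - B0. c (f b) *s f b) = 0" using s sum.reindex[OF inj, of "\<lambda>x. c x *s x"] by simp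
    then show "c y = 0" using key[of "\<lambda>b. c (f b)"] y by auto
  qed
qed

lemma rank_nullity:
  assumes S: "subspace S" and fd: "finitely_spanned scale S" and f: "linear_on scale S f"
  shows "dim S = dim {x\<in>S. f x = 0} + dim (f ` S)"
proof -
  let ?K = "{x\<in>S. f x = 0}"
  obtain B0 where B0: "B0 \<subseteq> ?K" "independent B0" "?K \<subseteq> span B0" "card B0 = dim ?K"
    by (rule basis_exists)
  obtain B where B: "B0 \<subseteq> B" "B \<subseteq> S" "independent B" "S \<subseteq> span B"
    using maximal_independent_subset_extend[of B0 S] B0 by auto
  obtain W where W: "finite W" "S \<subseteq> span W" using fd by (auto simp: finitely_spanned_def)
  have finB: "finite B" using independent_span_bound[OF W(1) B(3)] B(2) W(2) by auto
  note inj_indep = linear_on_kernel_complement_image_independent[OF S f B(1,2) finB B(3) B0(3)]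
  have spans: "f ` S \<subseteq> span (f ` (B - B0))"
  proof
    fix z assume "z \<in> f ` S"
    then obtain x where x: "x \<in> S" "z = f x" by auto
    then obtain u where u: "x = (\<Sum>b\<in>B. u b *s b)" using B(4) span_finite[OF finB] by auto
    have "f x = (\<Sum>b\<in>B. f (u b *s b))"
      using u linear_on_sum[OF S f finB, of "\<lambda>b. u b *s b"] B(2) S by (auto intro: subspace_scale)
    also have "\<dots> = (\<Sum>b\<in>B. u b *s f b)"
      using f B(2) unfolding linear_on_def by (auto intro!: sum.cong)
    also have "\<dots> = (\<Sum>b\<in>B - B0. u b *s f b)"
      using B0(1) by (intro sum.mono_neutral_right finB) auto
    also have "\<dots> \<in> span (f ` (B - B0))" by (intro span_sum span_scale span_base) auto
    finally show "z \<in> span (f ` (B - B0))" using x by simp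
  qed
  have "dim (f ` S) = card (f ` (B - B0))"
    using basis_card_eq_dim[of "f ` (B - B0)" "f ` S"] spans inj_indep(2) B(2)
    by (metis Diff_subset image_mono order_trans)
  also have "\<dots> = card B - card B0"
    using card_image[OF inj_indep(1)] B(1) finB by (simp add: card_Diff_subset finite_subset)
  finally show ?thesis
    using basis_card_eq_dim[OF B(2,4,3)] B0(4) card_mono[OF finB B(1)] by simp
qed

lemma dim_image_inj_on:
  assumes "subspace S" "finitely_spanned scale S" "linear_on scale S f" "inj_on f S"
  shows "dim (f ` S) = dim S"
proof -
  have "{x\<in>S. f x = 0} = {0}"
    using inj_onD[OF assms(4)] linear_on_zero[OF assms(1,3)] subspace_0[OF assms(1)] by auto
  moreover have "dim {0} = 0"
    by (metis dim_span span_empty dim_eq_card_independent independent_empty card.empty)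
  ultimately show ?thesis using rank_nullity[OF assms(1-3)] by simp
qed

lemma proj_along_add:
  assumes "subspace X" "subspace Y" "X \<inter> Y = {0}" "x \<in> X" "y \<in> Y"
  shows "proj_along X Y (x + y) = y"
  unfolding proj_along_def
proof (rule the_equality)
  show "y \<in> Y \<and> x + y - y \<in> X" using assms by simp
  fix y' assume y': "y' \<in> Y \<and> x + y - y' \<in> X"
  then have "y - y' \<in> Y" using assms subspace_diff by blast
  moreover have "y - y' = (x + y - y') - x" by (simp add: algebra_simps)
  then have "y - y' \<in> X" using y' assms subspace_diff by metis
  ultimately have "y - y' = 0" using assms(3) by blast
  then show "y' = y" by simp
qed

lemma linear_on_proj_along:
  assumes "subspace X" "subspace Y" "X \<inter> Y = {0}"
  shows "linear_on scale (X + Y) (proj_along X Y)"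
  unfolding linear_on_def
proof (intro conjI ballI allI)
  fix u v assume "u \<in> X + Y" "v \<in> X + Y"
  then obtain x1 y1 x2 y2 where "u = x1 + y1" "v = x2 + y2" "x1 \<in> X" "y1 \<in> Y" "x2 \<in> X" "y2 \<in> Y"
    by (auto elim!: set_plus_elim)
  moreover have "u + v = (x1 + x2) + (y1 + y2)" using calculation by (simp add: algebra_simps)
  ultimately show "proj_along X Y (u + v) = proj_along X Y u + proj_along X Y v"
    using assms proj_along_add subspace_add by metis
next
  fix c u assume "u \<in> X + Y"
  then obtain x1 y1 where "u = x1 + y1" "x1 \<in> X" "y1 \<in> Y" by (auto elim!: set_plus_elim)
  moreover have "c *s u = c *s x1 + c *s y1" using calculation by (simp add: algebra_simps)
  ultimately show "proj_along X Y (c *s u) = c *s proj_along X Y u"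
    using assms proj_along_add subspace_scale by metis
qed

lemma proj_along_kernel:
  assumes "subspace X" "subspace Y" "X \<inter> Y = {0}"
  shows "{v \<in> X + Y. proj_along X Y v = 0} = X"
proof safe
  fix v assume "v \<in> X + Y" "proj_along X Y v = 0"
  then show "v \<in> X" using proj_along_add[OF assms] by (auto elim!: set_plus_elim)
next
  fix x assume x: "x \<in> X"
  have y0: "0 \<in> Y" using assms subspace_0 by auto
  show "x \<in> X + Y" using set_plus_intro[OF x y0] by simp
  show "proj_along X Y x = 0" using proj_along_add[OF assms x y0] by simp
qed

lemma proj_along_image:
  assumes "subspace X" "subspace Y" "X \<inter> Y = {0}"
  shows "proj_along X Y ` (X + Y) = Y"
proof safe
  fix v assume "v \<in> X + Y"
  then show "proj_along X Y v \<in> Y" using proj_along_add[OF assms] by (auto elim!: set_plus_elim)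
next
  fix y assume y: "y \<in> Y"
  have x0: "0 \<in> X" using assms subspace_0 by auto
  have "proj_along X Y (0 + y) = y" using proj_along_add[OF assms x0 y] .
  then show "y \<in> proj_along X Y ` (X + Y)" using set_plus_intro[OF x0 y] by (metis image_eqI)
qed

lemma dim_direct_sum:
  assumes "subspace X" "subspace Y" "X \<inter> Y = {0}" "finitely_spanned scale X" "finitely_spanned scale Y"
  shows "dim (X + Y) = dim X + dim Y"
  using rank_nullity[OF subspace_set_plus[OF assms(1,2)] finitely_spanned_set_plus[OF assms(4,5)]
      linear_on_proj_along[OF assms(1-3)]]
    proj_along_kernel[OF assms(1-3)] proj_along_image[OF assms(1-3)] by simp

end

section \<open>The coordinate spaces \<open>vecs n\<close>\<close>

interpretation vs: vector_space "sc :: 'a::field \<Rightarrow> (nat \<Rightarrow> 'a) \<Rightarrow> (nat \<Rightarrow> 'a)"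
  by unfold_locales (auto simp: sc_def fun_eq_iff algebra_simps)

lemma sc_apply: "sc a v j = a * v j"
  by (simp add: sc_def)

lemma sum_apply: "(\<Sum>i\<in>I. f i) j = (\<Sum>i\<in>I. f i j)"
  by (induction I rule: infinite_finite_induct) auto

lemma module_hom_scI:
  assumes "\<And>x y. f (x + y) = f x + f y" "\<And>c x. f (sc c x) = sc c (f x)"
  shows "module_hom (sc :: 'a::field \<Rightarrow> (nat \<Rightarrow> 'a) \<Rightarrow> _) sc f"
  using assms vs.module_axioms by (simp add: module_hom_iff)

lemma linear_on_module_hom:
  "module_hom (sc :: 'a::field \<Rightarrow> (nat \<Rightarrow> 'a) \<Rightarrow> _) sc f \<Longrightarrow> linear_on sc S f"
  by (simp add: module_hom_iff linear_on_def)

lemma linear_on_subset: "linear_on s S f \<Longrightarrow> T \<subseteq> S \<Longrightarrow> linear_on s T f"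
  unfolding linear_on_def by blast

definition unit_vec :: "nat \<Rightarrow> nat \<Rightarrow> 'a::field" where
  "unit_vec j = (\<lambda>i. if i = j then 1 else 0)"

lemma zero_in_vecs: "0 \<in> vecs n"
  by (simp add: vecs_def)

lemma add_in_vecs: "(x :: nat \<Rightarrow> 'a::monoid_add) \<in> vecs n \<Longrightarrow> y \<in> vecs n \<Longrightarrow> x + y \<in> vecs n"
  by (simp add: vecs_def)

lemma set_plus_subset_vecs: "(X :: (nat \<Rightarrow> 'a::monoid_add) set) \<subseteq> vecs n \<Longrightarrow> Y \<subseteq> vecs n \<Longrightarrow> X + Y \<subseteq> vecs n"
  using add_in_vecs by (blast elim!: set_plus_elim)

lemma vecs_mono: "n \<le> n' \<Longrightarrow> vecs n \<subseteq> vecs n'"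
  by (auto simp: vecs_def)

lemma subspace_vecs: "vs.subspace (vecs n)"
  unfolding vs.subspace_def vecs_def by (auto simp: sc_apply)

lemma vecs_eq_sum_unit_vec: "v \<in> vecs n \<Longrightarrow> v = (\<Sum>j<n. sc (v j) (unit_vec j))"
proof
  fix x assume "v \<in> vecs n"
  then show "v x = (\<Sum>j<n. sc (v j) (unit_vec j)) x"
    by (cases "x < n") (auto simp: sum_apply sc_apply unit_vec_def vecs_def if_distrib cong: if_cong)
qed

lemma vecs_subset_span_unit_vec: "vecs n \<subseteq> vs.span (unit_vec ` {..<n})"
proof
  fix v :: "nat \<Rightarrow> 'a" assume "v \<in> vecs n"
  then have "v = (\<Sum>j<n. sc (v j) (unit_vec j))" by (rule vecs_eq_sum_unit_vec)
  also have "\<dots> \<in> vs.span (unit_vec ` {..<n})"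
    by (intro vs.span_sum vs.span_scale vs.span_base) auto
  finally show "v \<in> vs.span (unit_vec ` {..<n})" .
qed

lemma finitely_spanned_vecs: "finitely_spanned sc (vecs n)"
  unfolding finitely_spanned_def using vecs_subset_span_unit_vec by blast

lemma finitely_spanned_subset_vecs: "S \<subseteq> vecs n \<Longrightarrow> finitely_spanned sc S"
  using vs.finitely_spanned_subset[OF finitely_spanned_vecs] by blast

lemma independent_unit_vec: "vs.independent (unit_vec ` {..<n} :: (nat \<Rightarrow> 'a::field) set)"
proof (rule vs.independent_if_scalars_zero)
  show "finite (unit_vec ` {..<n} :: (nat \<Rightarrow> 'a) set)" by simp
  fix f :: "(nat \<Rightarrow> 'a) \<Rightarrow> 'a" and x :: "nat \<Rightarrow> 'a"
  assume s: "(\<Sum>x\<in>unit_vec ` {..<n}. sc (f x) x) = 0" and x: "x \<in> unit_vec ` {..<n}"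
  then obtain j where j: "j < n" "x = unit_vec j" by auto
  have inj: "inj_on (unit_vec :: nat \<Rightarrow> nat \<Rightarrow> 'a) {..<n}"
    by (rule inj_onI) (metis unit_vec_def zero_neq_one)
  have "(\<Sum>i<n. sc (f (unit_vec i)) (unit_vec i)) j = 0"
    using s by (simp add: sum.reindex[OF inj])
  then have "(\<Sum>i<n. if i = j then f (unit_vec i) else 0) = 0"
    by (simp add: sum_apply sc_apply unit_vec_def if_distrib cong: if_cong)
  then show "f x = 0" using j by simp
qed

lemma dim_vecs: "vs.dim (vecs n :: (nat \<Rightarrow> 'a::field) set) = n"
proof -
  have "unit_vec ` {..<n} \<subseteq> (vecs n :: (nat \<Rightarrow> 'a) set)"
    by (auto simp: unit_vec_def vecs_def)
  then have "vs.dim (vecs n :: (nat \<Rightarrow> 'a) set) = card (unit_vec ` {..<n} :: (nat \<Rightarrow> 'a) set)"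
    using vs.basis_card_eq_dim vecs_subset_span_unit_vec independent_unit_vec by metis
  also have "\<dots> = n"
    by (subst card_image) (auto intro!: inj_onI simp: unit_vec_def fun_eq_iff split: if_splits)
  finally show ?thesis .
qed

lemma dim_zero_space [simp]: "vs.dim {0 :: nat \<Rightarrow> 'a::field} = 0"
  using vs.dim_le_card[of "{0}" "{}"] by simp

lemma dim_le_of_subset_vecs: "S \<subseteq> vecs n \<Longrightarrow> vs.dim S \<le> n"
  using vs.dim_mono_finitely_spanned[OF finitely_spanned_vecs] dim_vecs by metis

definition mat_apply :: "nat \<Rightarrow> nat \<Rightarrow> (nat \<Rightarrow> nat \<Rightarrow> 'a::field) \<Rightarrow> (nat \<Rightarrow> 'a) \<Rightarrow> (nat \<Rightarrow> 'a)" where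
  "mat_apply n n' A x = (\<lambda>l. if l < n then \<Sum>j<n'. A l j * x j else 0)"

lemma module_hom_mat_apply: "module_hom sc sc (mat_apply n n' A)"
  by (rule module_hom_scI)
    (auto simp: mat_apply_def fun_eq_iff distrib_left sum.distrib sum_distrib_left
      mult.left_commute sc_apply)

lemma mat_apply_in_vecs: "mat_apply n n' A x \<in> vecs n"
  by (simp add: mat_apply_def vecs_def)

section \<open>Minima over compositions\<close>

lemma finite_compositions:
  assumes "finite \<Lambda>"
  shows "finite (compositions \<Lambda> kk r)"
proof -
  have "compositions \<Lambda> kk r \<subseteq> {rr. \<forall>i. (i \<in> \<Lambda> \<longrightarrow> rr i \<in> {..r}) \<and> (i \<notin> \<Lambda> \<longrightarrow> rr i = 0)}"
    using assms by (auto simp: compositions_def intro: member_le_sum)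
  moreover have "finite {rr. \<forall>i. (i \<in> \<Lambda> \<longrightarrow> rr i \<in> {..r}) \<and> (i \<notin> \<Lambda> \<longrightarrow> rr i = (0::nat))}"
    using assms by (intro finite_set_of_finite_funs) auto
  ultimately show ?thesis by (rule finite_subset)
qed

lemma compositions_cong: "(\<And>i. i \<in> \<Lambda> \<Longrightarrow> kk i = kk' i) \<Longrightarrow> compositions \<Lambda> kk r = compositions \<Lambda> kk' r"
  by (simp add: compositions_def)

lemma compositions_superset:
  assumes "\<Lambda> \<subseteq> I" "finite I" "\<forall>i\<in>I - \<Lambda>. kk i = 0"
  shows "compositions I kk r = compositions \<Lambda> kk r"
proof (rule set_eqI)
  have sum_eq: "(\<Sum>i\<in>I. rr i) = (\<Sum>i\<in>\<Lambda>. rr i)" if "\<forall>i\<in>I - \<Lambda>. rr i = 0" for rr :: "nat \<Rightarrow> nat"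
    using that assms(1,2) by (intro sum.mono_neutral_right) auto
  fix rr
  show "rr \<in> compositions I kk r \<longleftrightarrow> rr \<in> compositions \<Lambda> kk r"
  proof
    assume rr: "rr \<in> compositions I kk r"
    then have "\<forall>i\<in>I - \<Lambda>. rr i = 0" using assms(3) by (auto simp: compositions_def)
    then show "rr \<in> compositions \<Lambda> kk r"
      using rr sum_eq assms(1) by (auto simp: compositions_def)
  next
    assume rr: "rr \<in> compositions \<Lambda> kk r"
    then have "\<forall>i\<in>I - \<Lambda>. rr i = 0" by (auto simp: compositions_def)
    then show "rr \<in> compositions I kk r"
      using rr sum_eq assms(1) by (auto simp: compositions_def)
  qed
qed

lemma compositions_total:
  assumes "finite \<Lambda>"
  shows "compositions \<Lambda> kk (\<Sum>i\<in>\<Lambda>. kk i) = {\<lambda>i. if i \<in> \<Lambda> then kk i else 0}"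
proof safe
  fix rr assume rr: "rr \<in> compositions \<Lambda> kk (\<Sum>i\<in>\<Lambda>. kk i)"
  then have "rr i = kk i" if "i \<in> \<Lambda>" for i
    using sum_mono_inv[of rr \<Lambda> kk] assms that by (auto simp: compositions_def)
  then show "rr = (\<lambda>i. if i \<in> \<Lambda> then kk i else 0)"
    using rr by (auto simp: compositions_def)
qed (auto simp: compositions_def intro!: sum.cong)

lemma compositions_one:
  assumes "finite \<Lambda>" "\<forall>i\<in>\<Lambda>. 1 \<le> kk i"
  shows "compositions \<Lambda> kk 1 = (\<lambda>i j. if j = i then 1 else 0) ` \<Lambda>"
proof safe
  fix rr assume rr: "rr \<in> compositions \<Lambda> kk 1"
  then have sum1: "(\<Sum>i\<in>\<Lambda>. rr i) = 1" and out: "\<forall>i. i \<notin> \<Lambda> \<longrightarrow> rr i = 0"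
    by (auto simp: compositions_def)
  have "\<exists>i\<in>\<Lambda>. rr i \<noteq> 0"
  proof (rule ccontr)
    assume "\<not> (\<exists>i\<in>\<Lambda>. rr i \<noteq> 0)"
    then show False using sum1 by simp
  qed
  then obtain i where i: "i \<in> \<Lambda>" "rr i \<noteq> 0" by blast
  have "rr i + (\<Sum>j\<in>\<Lambda> - {i}. rr j) = 1" using sum1 i(1) assms(1) by (simp add: sum.remove)
  then have "rr i = 1" "(\<Sum>j\<in>\<Lambda> - {i}. rr j) = 0" using i(2) by linarith+
  then have "rr i = 1" "\<forall>j\<in>\<Lambda> - {i}. rr j = 0" using assms(1) by simp_all
  then have "rr = (\<lambda>j. if j = i then 1 else 0)" using out by (auto simp: fun_eq_iff)
  then show "rr \<in> (\<lambda>i j. if j = i then 1 else 0) ` \<Lambda>" using i(1) by blast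
qed (use assms in \<open>auto simp: compositions_def\<close>)

context
  fixes f :: "nat \<Rightarrow> nat \<Rightarrow> nat" and \<Lambda> :: "nat set"
  assumes fin: "finite \<Lambda>" and f0: "\<And>i. f i 0 = 0"
begin

lemma Min_compositions_one:
  assumes "\<forall>i\<in>\<Lambda>. 1 \<le> kk i"
  shows "Min ((\<lambda>rr. \<Sum>i\<in>\<Lambda>. f i (rr i)) ` compositions \<Lambda> kk 1) = Min ((\<lambda>i. f i 1) ` \<Lambda>)"
proof -
  have "(\<lambda>i. \<Sum>j\<in>\<Lambda>. f j (if j = i then 1 else 0)) ` \<Lambda> = (\<lambda>i. f i 1) ` \<Lambda>"
    using fin by (intro image_cong) (simp_all add: if_distrib f0 cong: if_cong)
  then show ?thesis
    unfolding compositions_one[OF fin assms] image_image by simp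
qed

lemma Min_compositions_total:
  "Min ((\<lambda>rr. \<Sum>i\<in>\<Lambda>. f i (rr i)) ` compositions \<Lambda> kk (\<Sum>i\<in>\<Lambda>. kk i)) = (\<Sum>i\<in>\<Lambda>. f i (kk i))"
  unfolding compositions_total[OF fin] by (auto intro: sum.cong)

lemma Min_compositions_le:
  assumes ne: "compositions \<Lambda> kk r \<noteq> {}"
    and bound: "\<And>i x. i \<in> \<Lambda> \<Longrightarrow> 1 \<le> x \<Longrightarrow> x \<le> kk i \<Longrightarrow> f i x \<le> g i + x"
  shows "Min ((\<lambda>rr. \<Sum>i\<in>\<Lambda>. f i (rr i)) ` compositions \<Lambda> kk r)
    \<le> Min ((\<lambda>rr. \<Sum>i\<in>{i\<in>\<Lambda>. rr i \<noteq> 0}. g i) ` compositions \<Lambda> kk r) + r"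
proof -
  let ?g = "\<lambda>rr. \<Sum>i\<in>{i\<in>\<Lambda>. rr i \<noteq> 0}. g i"
  have "Min (?g ` compositions \<Lambda> kk r) \<in> ?g ` compositions \<Lambda> kk r"
    using finite_compositions[OF fin] ne by (intro Min_in) auto
  then obtain rr where rr: "rr \<in> compositions \<Lambda> kk r" "Min (?g ` compositions \<Lambda> kk r) = ?g rr"
    by (rule imageE)
  have le: "\<forall>i\<in>\<Lambda>. rr i \<le> kk i" and sum_r: "(\<Sum>i\<in>\<Lambda>. rr i) = r"
    using rr(1) by (auto simp: compositions_def)
  have "(\<Sum>i\<in>\<Lambda>. f i (rr i)) \<le> (\<Sum>i\<in>\<Lambda>. (if rr i \<noteq> 0 then g i else 0) + rr i)"
    using bound le by (intro sum_mono) (auto simp: f0)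
  also have "\<dots> = (\<Sum>i\<in>\<Lambda>. if rr i \<noteq> 0 then g i else 0) + r"
    using sum_r by (simp only: sum.distrib)
  also have "(\<Sum>i\<in>\<Lambda>. if rr i \<noteq> 0 then g i else 0) = ?g rr"
    by (rule sum.inter_filter[OF fin, symmetric])
  finally have "(\<Sum>i\<in>\<Lambda>. f i (rr i)) \<le> ?g rr + r" .
  moreover have "Min ((\<lambda>rr. \<Sum>i\<in>\<Lambda>. f i (rr i)) ` compositions \<Lambda> kk r) \<le> (\<Sum>i\<in>\<Lambda>. f i (rr i))"
    using rr(1) finite_compositions[OF fin] by (intro Min_le) auto
  ultimately show ?thesis unfolding rr(2) by simp
qed

end

section \<open>Coordinates over \<open>\<K>\<close> and rank weights\<close>

locale extension_basis =
  fixes emb :: "'k::field \<Rightarrow> 'l::field" and b :: "nat \<Rightarrow> 'l" and m :: nat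
  assumes emb: "field_emb emb" and basis: "is_K_basis emb b m"
begin

lemma emb_add: "emb (x + y) = emb x + emb y"
  using emb by (simp add: field_emb_def)

lemma emb_mult: "emb (x * y) = emb x * emb y"
  using emb by (simp add: field_emb_def)

lemma emb_one [simp]: "emb 1 = 1"
  using emb by (simp add: field_emb_def)

lemma emb_zero [simp]: "emb 0 = 0"
  using emb_add[of 0 0] by (metis add_cancel_left_right)

lemma emb_diff: "emb (x - y) = emb x - emb y"
  using emb_add[of "x - y" y] by (simp add: eq_diff_eq)

lemma emb_sum: "emb (\<Sum>i\<in>I. f i) = (\<Sum>i\<in>I. emb (f i))"
  by (induction I rule: infinite_finite_induct) (auto simp: emb_add)

lemma emb_eq_iff [simp]: "emb x = emb y \<longleftrightarrow> x = y"
proof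
  assume xy: "emb x = emb y"
  show "x = y"
  proof (rule ccontr)
    assume "x \<noteq> y"
    then have "emb ((x - y) * inverse (x - y)) = 1" by simp
    then show False using xy by (simp add: emb_mult emb_diff)
  qed
qed simp

lemma emb_eq_0_iff [simp]: "emb x = 0 \<longleftrightarrow> x = 0"
  using emb_eq_iff[of x 0] by simp

abbreviation crd :: "'l \<Rightarrow> nat \<Rightarrow> 'k" where
  "crd \<equiv> coord emb b m"

lemma coord_spec: "(\<forall>j\<ge>m. crd x j = 0) \<and> x = (\<Sum>j<m. emb (crd x j) * b j)"
proof -
  have "\<exists>!a. (\<forall>j\<ge>m. a j = 0) \<and> x = (\<Sum>j<m. emb (a j) * b j)"
    using basis by (simp add: is_K_basis_def)
  from theI'[OF this] show ?thesis by (simp add: coord_def)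
qed

lemma coord_unique:
  assumes "\<forall>j\<ge>m. a j = 0" "x = (\<Sum>j<m. emb (a j) * b j)"
  shows "crd x = a"
proof -
  have "\<exists>!a. (\<forall>j\<ge>m. a j = 0) \<and> x = (\<Sum>j<m. emb (a j) * b j)"
    using basis by (simp add: is_K_basis_def)
  then show ?thesis using coord_spec[of x] assms by blast
qed

lemma coord_add: "crd (x + y) = (\<lambda>j. crd x j + crd y j)"
proof (rule coord_unique)
  show "\<forall>j\<ge>m. crd x j + crd y j = 0" using coord_spec by simp
  have "x + y = (\<Sum>j<m. emb (crd x j) * b j) + (\<Sum>j<m. emb (crd y j) * b j)"
    using coord_spec by metis
  then show "x + y = (\<Sum>j<m. emb (crd x j + crd y j) * b j)"
    by (simp add: emb_add distrib_right sum.distrib)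
qed

lemma coord_emb_mult: "crd (emb c * x) = (\<lambda>j. c * crd x j)"
proof (rule coord_unique)
  show "\<forall>j\<ge>m. c * crd x j = 0" using coord_spec by simp
  have "emb c * x = emb c * (\<Sum>j<m. emb (crd x j) * b j)" using coord_spec by metis
  then show "emb c * x = (\<Sum>j<m. emb (c * crd x j) * b j)"
    by (simp add: emb_mult sum_distrib_left mult.assoc)
qed

lemma coord_zero [simp]: "crd 0 = (\<lambda>j. 0)"
  by (rule coord_unique) auto

lemma coord_sum: "crd (\<Sum>i\<in>I. f i) = (\<lambda>j. \<Sum>i\<in>I. crd (f i) j)"
  by (induction I rule: infinite_finite_induct) (auto simp: coord_add)

lemma coord_eq_0_imp: "\<forall>j<m. crd x j = 0 \<Longrightarrow> x = 0"
  using coord_spec[of x] by simp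

definition coord_row :: "nat \<Rightarrow> (nat \<Rightarrow> 'l) \<Rightarrow> nat \<Rightarrow> nat \<Rightarrow> 'k" where
  "coord_row n c s = (\<lambda>l. if l < n then crd (c l) s else 0)"

definition coord_rows :: "nat \<Rightarrow> (nat \<Rightarrow> 'l) set \<Rightarrow> (nat \<Rightarrow> 'k) set" where
  "coord_rows n D = {coord_row n d s | d s. d \<in> D \<and> s < m}"

lemma coord_row_in_vecs: "coord_row n c s \<in> vecs n"
  by (simp add: coord_row_def vecs_def)

lemma coord_rows_subset_vecs: "coord_rows n D \<subseteq> vecs n"
  using coord_row_in_vecs by (auto simp: coord_rows_def)

lemma coord_rows_subset_vecs_of_subset: "D \<subseteq> vecs N \<Longrightarrow> coord_rows n D \<subseteq> vecs N"
  by (auto simp: coord_rows_def coord_row_def vecs_def)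

lemma coord_row_add: "coord_row n (c + c') s = coord_row n c s + coord_row n c' s"
  by (auto simp: coord_row_def coord_add fun_eq_iff)

lemma coord_row_zero [simp]: "coord_row n 0 s = 0"
  by (auto simp: coord_row_def fun_eq_iff)

lemma coord_row_sum: "coord_row n (\<Sum>i\<in>I. f i) s = (\<Sum>i\<in>I. coord_row n (f i) s)"
  by (induction I rule: infinite_finite_induct) (simp_all add: coord_row_add del: plus_fun_apply zero_fun_apply)

lemma coord_rows_eq_0_imp: "c \<in> vecs n \<Longrightarrow> \<forall>s<m. coord_row n c s = 0 \<Longrightarrow> c = 0"
proof (rule ext)
  fix l assume c: "c \<in> vecs n" and rows: "\<forall>s<m. coord_row n c s = 0"
  show "c l = 0 l"
  proof (cases "l < n")
    case True
    have "crd (c l) s = 0" if "s < m" for s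
      using fun_cong[OF rows[rule_format, OF that], of l] True by (simp add: coord_row_def)
    then show ?thesis using coord_eq_0_imp by simp
  qed (use c in \<open>simp add: vecs_def\<close>)
qed

lemma Rsupp_sp_eq_span_coord_rows: "Rsupp_sp emb b m n D = vs.span (coord_rows n D)"
proof -
  have R: "Rsupp emb b m n d = vs.span {coord_row n d s | s. s < m}" for d
    unfolding Rsupp_def coord_row_def by simp
  have "vs.span (\<Union>d\<in>D. Rsupp emb b m n d) = vs.span (coord_rows n D)"
    unfolding vs.span_eq
  proof
    show "(\<Union>d\<in>D. Rsupp emb b m n d) \<subseteq> vs.span (coord_rows n D)"
      unfolding R by (intro UN_least vs.span_mono) (auto simp: coord_rows_def)
    show "coord_rows n D \<subseteq> vs.span (\<Union>d\<in>D. Rsupp emb b m n d)"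
      unfolding R coord_rows_def by (auto intro!: vs.span_base vs.span_superset[THEN subsetD])
  qed
  then show ?thesis by (simp add: Rsupp_sp_def)
qed

lemma wtR_sp_eq_dim_coord_rows: "wtR_sp emb b m n D = vs.dim (coord_rows n D)"
  by (simp add: wtR_sp_def Rsupp_sp_eq_span_coord_rows)

lemma wtR_sp_le: "wtR_sp emb b m n D \<le> n"
  unfolding wtR_sp_eq_dim_coord_rows by (rule dim_le_of_subset_vecs[OF coord_rows_subset_vecs])

lemma finitely_spanned_span_coord_rows: "finitely_spanned sc (vs.span (coord_rows n D))"
  by (rule vs.finitely_spanned_span, rule finitely_spanned_subset_vecs, rule coord_rows_subset_vecs)

lemma Mr_0 [simp]: "Mr emb b m n C 0 = 0"
  by (simp add: Mr_def)

lemma Mr_le_wtR_sp: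
  assumes "vs.subspace D" "D \<subseteq> C" "vs.dim D = r"
  shows "Mr emb b m n C r \<le> wtR_sp emb b m n D"
proof (cases "r = 0")
  case False
  let ?S = "{wtR_sp emb b m n D | D. vs.subspace D \<and> D \<subseteq> C \<and> vs.dim D = r}"
  have "finite ?S" using wtR_sp_le by (auto intro: finite_subset[of _ "{..n}"])
  moreover have "wtR_sp emb b m n D \<in> ?S" using assms by blast
  ultimately show ?thesis using False by (simp add: Mr_def)
qed simp

lemma Mr_attained:
  assumes "vs.subspace C" "C \<subseteq> vecs n" "r \<le> vs.dim C"
  shows "\<exists>D. vs.subspace D \<and> D \<subseteq> C \<and> vs.dim D = r \<and> wtR_sp emb b m n D = Mr emb b m n C r"
proof (cases "r = 0")
  case True
  have "coord_rows n {0} \<subseteq> {0}" by (auto simp: coord_rows_def)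
  then have "wtR_sp emb b m n {0} = 0"
    unfolding wtR_sp_eq_dim_coord_rows using vs.dim_le_card[of _ "{}"] by simp
  then show ?thesis using True vs.subspace_0[OF assms(1)] by (intro exI[of _ "{0}"]) auto
next
  case False
  let ?S = "{wtR_sp emb b m n D | D. vs.subspace D \<and> D \<subseteq> C \<and> vs.dim D = r}"
  have "finite ?S" using wtR_sp_le by (auto intro: finite_subset[of _ "{..n}"])
  moreover have "?S \<noteq> {}"
    using vs.subspace_of_dim_exists[OF assms(1) finitely_spanned_subset_vecs[OF assms(2)] assms(3)]
    by blast
  ultimately have "Min ?S \<in> ?S" by (rule Min_in)
  then show ?thesis using False by (auto simp: Mr_def)
qed

lemma Mr_le_of_subset_vecs:
  assumes "vs.subspace D" "D \<subseteq> C" "vs.dim D = r" "D \<subseteq> vecs N"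
  shows "Mr emb b m n C r \<le> N"
proof -
  have "Mr emb b m n C r \<le> wtR_sp emb b m n D" by (rule Mr_le_wtR_sp[OF assms(1-3)])
  also have "\<dots> \<le> N"
    unfolding wtR_sp_eq_dim_coord_rows
    by (rule dim_le_of_subset_vecs[OF coord_rows_subset_vecs_of_subset[OF assms(4)]])
  finally show ?thesis .
qed

abbreviation lift_mat :: "(nat \<Rightarrow> nat \<Rightarrow> 'k) \<Rightarrow> nat \<Rightarrow> nat \<Rightarrow> 'l" where
  "lift_mat A \<equiv> \<lambda>i j. emb (A i j)"

lemma coord_row_mat_apply_lift:
  "coord_row n (mat_apply n n' (lift_mat A) c) s = mat_apply n n' A (coord_row n' c s)"
proof (rule ext)
  fix l
  show "coord_row n (mat_apply n n' (lift_mat A) c) s l = mat_apply n n' A (coord_row n' c s) l"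
  proof (cases "l < n")
    case True
    have "coord_row n (mat_apply n n' (lift_mat A) c) s l = crd (\<Sum>j<n'. emb (A l j) * c j) s"
      using True by (simp add: coord_row_def mat_apply_def)
    also have "\<dots> = (\<Sum>j<n'. A l j * crd (c j) s)"
      by (simp add: coord_sum coord_emb_mult)
    also have "\<dots> = mat_apply n n' A (coord_row n' c s) l"
      using True by (simp add: mat_apply_def coord_row_def)
    finally show ?thesis .
  qed (simp add: coord_row_def mat_apply_def)
qed

lemma coord_rows_image_mat_apply_lift:
  "coord_rows n (mat_apply n n' (lift_mat A) ` D) = mat_apply n n' A ` coord_rows n' D"
proof -
  have "coord_rows n (mat_apply n n' (lift_mat A) ` D)
      = {coord_row n (mat_apply n n' (lift_mat A) d) s | d s. d \<in> D \<and> s < m}"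
    unfolding coord_rows_def by blast
  also have "\<dots> = mat_apply n n' A ` coord_rows n' D"
    unfolding coord_row_mat_apply_lift coord_rows_def by blast
  finally show ?thesis .
qed

lemma inj_on_mat_apply_lift:
  assumes inj: "inj_on (mat_apply n n' A) (vecs n')"
  shows "inj_on (mat_apply n n' (lift_mat A)) (vecs n')"
proof (rule inj_onI)
  interpret L: module_hom sc sc "mat_apply n n' (lift_mat A)" by (rule module_hom_mat_apply)
  interpret K: module_hom sc sc "mat_apply n n' A" by (rule module_hom_mat_apply)
  fix c c' assume cc: "c \<in> vecs n'" "c' \<in> vecs n'"
    "mat_apply n n' (lift_mat A) c = mat_apply n n' (lift_mat A) c'"
  have "mat_apply n n' (lift_mat A) (c - c') = 0" using cc L.diff by simp
  then have "mat_apply n n' A (coord_row n' (c - c') s) = mat_apply n n' A 0" for s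
    by (simp add: coord_row_mat_apply_lift[symmetric])
  then have "coord_row n' (c - c') s = 0" for s
    using inj_onD[OF inj _ coord_row_in_vecs zero_in_vecs] by blast
  moreover have "c - c' \<in> vecs n'" using cc by (simp add: vecs_def)
  ultimately have "c - c' = 0" by (intro coord_rows_eq_0_imp) auto
  then show "c = c'" by simp
qed

lemma wtR_sp_image_mat_apply_lift:
  assumes inj: "inj_on (mat_apply n n' A) (vecs n')"
  shows "wtR_sp emb b m n (mat_apply n n' (lift_mat A) ` D) = wtR_sp emb b m n' D"
proof -
  interpret K: module_hom sc sc "mat_apply n n' A" by (rule module_hom_mat_apply)
  have sub: "vs.span (coord_rows n' D) \<subseteq> vecs n'"
    using coord_rows_subset_vecs subspace_vecs vs.span_minimal by blast
  have "wtR_sp emb b m n (mat_apply n n' (lift_mat A) ` D)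
      = vs.dim (vs.span (mat_apply n n' A ` coord_rows n' D))"
    by (simp add: wtR_sp_eq_dim_coord_rows coord_rows_image_mat_apply_lift)
  also have "\<dots> = vs.dim (mat_apply n n' A ` vs.span (coord_rows n' D))"
    by (simp only: K.span_image)
  also have "\<dots> = vs.dim (vs.span (coord_rows n' D))"
    by (rule vs.dim_image_inj_on)
      (use sub finitely_spanned_subset_vecs linear_on_module_hom[OF module_hom_mat_apply]
        inj_on_subset[OF inj sub] in auto)
  finally show ?thesis by (simp add: wtR_sp_eq_dim_coord_rows)
qed

lemma Mr_image_mat_apply_lift:
  assumes inj: "inj_on (mat_apply n n' A) (vecs n')"
    and C: "vs.subspace C" "C \<subseteq> vecs n'"
  shows "Mr emb b m n (mat_apply n n' (lift_mat A) ` C) r = Mr emb b m n' C r"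
proof -
  let ?F = "mat_apply n n' (lift_mat A)"
  interpret L: module_hom sc sc ?F by (rule module_hom_mat_apply)
  have dim_eq: "vs.dim (?F ` D) = vs.dim D" if "vs.subspace D" "D \<subseteq> vecs n'" for D
    by (rule vs.dim_image_inj_on)
      (use that finitely_spanned_subset_vecs linear_on_module_hom[OF module_hom_mat_apply]
        inj_on_subset[OF inj_on_mat_apply_lift[OF inj]] in auto)
  have "{wtR_sp emb b m n D' | D'. vs.subspace D' \<and> D' \<subseteq> ?F ` C \<and> vs.dim D' = r}
      = {wtR_sp emb b m n' D | D. vs.subspace D \<and> D \<subseteq> C \<and> vs.dim D = r}"
  proof safe
    fix D' assume D': "vs.subspace D'" "D' \<subseteq> ?F ` C" "r = vs.dim D'"
    let ?D = "C \<inter> ?F -` D'"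
    have img: "?F ` ?D = D'" using D'(2) by blast
    have sub: "vs.subspace ?D" using C(1) L.subspace_vimage[OF D'(1)] by (rule vs.subspace_inter)
    have "?D \<subseteq> vecs n'" using C(2) by blast
    then have "vs.dim ?D = vs.dim D'" using dim_eq[OF sub] unfolding img by simp
    moreover have "wtR_sp emb b m n D' = wtR_sp emb b m n' ?D"
      using wtR_sp_image_mat_apply_lift[OF inj, of ?D] img by simp
    ultimately show "\<exists>D. wtR_sp emb b m n D' = wtR_sp emb b m n' D \<and> vs.subspace D \<and> D \<subseteq> C
        \<and> vs.dim D = vs.dim D'"
      using sub by blast
  next
    fix D assume D: "vs.subspace D" "D \<subseteq> C" "r = vs.dim D"
    have "vs.subspace (?F ` D)" "?F ` D \<subseteq> ?F ` C" using L.subspace_image[OF D(1)] D(2) by auto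
    moreover have "vs.dim (?F ` D) = vs.dim D" using dim_eq[OF D(1)] D(2) C(2) by blast
    moreover have "wtR_sp emb b m n' D = wtR_sp emb b m n (?F ` D)"
      using wtR_sp_image_mat_apply_lift[OF inj, of D] by simp
    ultimately show "\<exists>D'. wtR_sp emb b m n' D = wtR_sp emb b m n D' \<and> vs.subspace D'
        \<and> D' \<subseteq> ?F ` C \<and> vs.dim D' = vs.dim D"
      by blast
  qed
  then show ?thesis by (simp add: Mr_def)
qed

section \<open>Rank weights of direct sums with independent row spaces\<close>

definition rows_in :: "nat \<Rightarrow> (nat \<Rightarrow> 'k) set \<Rightarrow> (nat \<Rightarrow> 'l) set" where
  "rows_in n X = {c \<in> vecs n. \<forall>s<m. coord_row n c s \<in> X}"

lemma rows_in_subset_vecs: "rows_in n X \<subseteq> vecs n"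
  by (auto simp: rows_in_def)

lemma zero_in_rows_in: "0 \<in> X \<Longrightarrow> 0 \<in> rows_in n X"
  by (simp add: rows_in_def zero_in_vecs)

lemma rows_in_inter:
  assumes "X \<inter> Y = {0}" "A \<subseteq> rows_in n X" "B \<subseteq> rows_in n Y"
  shows "A \<inter> B \<subseteq> {0}"
proof
  fix c assume c: "c \<in> A \<inter> B"
  then have "coord_row n c s \<in> X \<inter> Y" if "s < m" for s
    using assms(2,3) that by (auto simp: rows_in_def)
  moreover have "c \<in> vecs n" using c assms(2) by (auto simp: rows_in_def)
  ultimately show "c \<in> {0}" using assms(1) coord_rows_eq_0_imp by blast
qed

lemma rows_in_set_plus:
  assumes "A \<subseteq> rows_in n X" "B \<subseteq> rows_in n Y"
  shows "A + B \<subseteq> rows_in n (X + Y)"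
proof
  fix c assume "c \<in> A + B"
  then obtain a a' where c: "c = a + a'" "a \<in> A" "a' \<in> B" by (auto elim!: set_plus_elim)
  have "a \<in> vecs n" "a' \<in> vecs n" using c(2,3) assms rows_in_subset_vecs by blast+
  then have "c \<in> vecs n" using add_in_vecs c(1) by blast
  moreover have "coord_row n c s \<in> X + Y" if "s < m" for s
    using c assms that by (auto simp: rows_in_def coord_row_add intro!: set_plus_intro)
  ultimately show "c \<in> rows_in n (X + Y)" by (simp add: rows_in_def)
qed

lemma wtR_sp_set_plus_le: "wtR_sp emb b m n (D + D') \<le> wtR_sp emb b m n D + wtR_sp emb b m n D'"
proof -
  have "coord_rows n (D + D') \<subseteq> vs.span (coord_rows n D) + vs.span (coord_rows n D')"
  proof
    fix x assume "x \<in> coord_rows n (D + D')"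
    then obtain d s where x: "x = coord_row n d s" "d \<in> D + D'" "s < m"
      by (auto simp: coord_rows_def)
    then obtain a a' where "d = a + a'" "a \<in> D" "a' \<in> D'" by (auto elim!: set_plus_elim)
    then show "x \<in> vs.span (coord_rows n D) + vs.span (coord_rows n D')"
      using x by (auto simp: coord_row_add coord_rows_def intro!: set_plus_intro vs.span_base)
  qed
  then have "vs.dim (coord_rows n (D + D'))
      \<le> vs.dim (vs.span (coord_rows n D) + vs.span (coord_rows n D'))"
    by (rule vs.dim_mono_finitely_spanned[rotated])
      (intro vs.finitely_spanned_set_plus finitely_spanned_span_coord_rows)
  also have "\<dots> \<le> vs.dim (coord_rows n D) + vs.dim (coord_rows n D')"
    using vs.dim_set_plus_le[OF finitely_spanned_span_coord_rows finitely_spanned_span_coord_rows]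
    by simp
  finally show ?thesis by (simp add: wtR_sp_eq_dim_coord_rows)
qed

lemma Mr_set_plus_le:
  assumes XY: "X \<inter> Y = {0}"
    and A: "vs.subspace A" "A \<subseteq> rows_in n X" and B: "vs.subspace B" "B \<subseteq> rows_in n Y"
    and r: "r \<le> vs.dim A" "r' \<le> vs.dim B"
  shows "Mr emb b m n (A + B) (r + r') \<le> Mr emb b m n A r + Mr emb b m n B r'"
proof -
  have Av: "A \<subseteq> vecs n" and Bv: "B \<subseteq> vecs n" using A B rows_in_subset_vecs by blast+
  obtain D where D: "vs.subspace D" "D \<subseteq> A" "vs.dim D = r" "wtR_sp emb b m n D = Mr emb b m n A r"
    using Mr_attained[OF A(1) Av r(1)] by blast
  obtain D' where D': "vs.subspace D'" "D' \<subseteq> B" "vs.dim D' = r'"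
    "wtR_sp emb b m n D' = Mr emb b m n B r'"
    using Mr_attained[OF B(1) Bv r(2)] by blast
  have "D \<inter> D' = {0}"
    using rows_in_inter[OF XY A(2) B(2)] D(1,2) D'(1,2) vs.subspace_0 by blast
  then have "vs.dim (D + D') = r + r'"
    using vs.dim_direct_sum[OF D(1) D'(1)] finitely_spanned_subset_vecs D(2,3) D'(2,3) Av Bv
    by (metis order_trans)
  moreover have "D + D' \<subseteq> A + B" using D(2) D'(2) by (rule set_plus_mono2)
  ultimately have "Mr emb b m n (A + B) (r + r') \<le> wtR_sp emb b m n (D + D')"
    by (intro Mr_le_wtR_sp vs.subspace_set_plus D(1) D'(1))
  also have "\<dots> \<le> Mr emb b m n A r + Mr emb b m n B r'"
    using wtR_sp_set_plus_le[of n D D'] D(4) D'(4) by simp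
  finally show ?thesis .
qed

lemma coord_row_proj_along:
  assumes X: "vs.subspace X" and Y: "vs.subspace Y" and XY: "X \<inter> Y = {0}"
    and A: "vs.subspace A" "A \<subseteq> rows_in n X" and B: "vs.subspace B" "B \<subseteq> rows_in n Y"
    and d: "d \<in> A + B" and s: "s < m"
  shows "coord_row n (proj_along A B d) s = proj_along X Y (coord_row n d s)"
proof -
  have AB: "A \<inter> B = {0}" using rows_in_inter[OF XY A(2) B(2)] A(1) B(1) vs.subspace_0 by blast
  obtain a a' where d: "d = a + a'" "a \<in> A" "a' \<in> B" using d by (auto elim!: set_plus_elim)
  have "coord_row n a s \<in> X" "coord_row n a' s \<in> Y" using d A(2) B(2) s by (auto simp: rows_in_def)
  then show ?thesis
    using vs.proj_along_add[OF X Y XY] vs.proj_along_add[OF A(1) B(1) AB d(2,3)] d(1)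
    by (simp add: coord_row_add)
qed

lemma wtR_sp_split:
  assumes X: "vs.subspace X" and Y: "vs.subspace Y" and XY: "X \<inter> Y = {0}" and Yv: "Y \<subseteq> vecs n"
    and A: "vs.subspace A" "A \<subseteq> rows_in n X" and B: "vs.subspace B" "B \<subseteq> rows_in n Y"
    and D: "D \<subseteq> A + B"
  shows "wtR_sp emb b m n (D \<inter> A) + wtR_sp emb b m n (proj_along A B ` D) \<le> wtR_sp emb b m n D"
proof -
  let ?R = "vs.span (coord_rows n D)"
  have RXY: "?R \<subseteq> X + Y"
    using D rows_in_set_plus[OF A(2) B(2)]
    by (intro vs.span_minimal vs.subspace_set_plus X Y) (auto simp: coord_rows_def rows_in_def)
  have lin: "linear_on sc ?R (proj_along X Y)"
    using linear_on_subset[OF vs.linear_on_proj_along[OF X Y XY] RXY] .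
  have "coord_rows n (D \<inter> A) \<subseteq> ?R \<inter> X"
    using A(2) by (auto simp: coord_rows_def rows_in_def intro: vs.span_base)
  then have "vs.span (coord_rows n (D \<inter> A)) \<subseteq> ?R \<inter> X"
    by (intro vs.span_minimal vs.subspace_inter vs.subspace_span X)
  then have 1: "wtR_sp emb b m n (D \<inter> A) \<le> vs.dim (?R \<inter> X)"
    unfolding wtR_sp_eq_dim_coord_rows
    by (metis vs.dim_mono_finitely_spanned vs.dim_span vs.finitely_spanned_subset
        finitely_spanned_span_coord_rows inf_le1)
  have "coord_rows n (proj_along A B ` D) \<subseteq> proj_along X Y ` ?R"
    using coord_row_proj_along[OF X Y XY A B] D by (auto simp: coord_rows_def intro: vs.span_base)
  then have "vs.span (coord_rows n (proj_along A B ` D)) \<subseteq> proj_along X Y ` ?R"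
    by (intro vs.span_minimal vs.subspace_linear_on_image[OF vs.subspace_span lin])
  moreover have "proj_along X Y ` ?R \<subseteq> vecs n"
    using vs.proj_along_image[OF X Y XY] RXY Yv by blast
  ultimately have 2: "wtR_sp emb b m n (proj_along A B ` D) \<le> vs.dim (proj_along X Y ` ?R)"
    unfolding wtR_sp_eq_dim_coord_rows
    by (metis vs.dim_mono_finitely_spanned vs.dim_span finitely_spanned_subset_vecs)
  have "{v \<in> ?R. proj_along X Y v = 0} = ?R \<inter> X"
    using vs.proj_along_kernel[OF X Y XY] RXY by blast
  then have "vs.dim ?R = vs.dim (?R \<inter> X) + vs.dim (proj_along X Y ` ?R)"
    using vs.rank_nullity[OF vs.subspace_span finitely_spanned_span_coord_rows lin] by simp
  then show ?thesis using 1 2 by (simp add: wtR_sp_eq_dim_coord_rows)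
qed

lemma Mr_set_plus_split:
  assumes X: "vs.subspace X" and Y: "vs.subspace Y" and XY: "X \<inter> Y = {0}" and Yv: "Y \<subseteq> vecs n"
    and A: "vs.subspace A" "A \<subseteq> rows_in n X" and B: "vs.subspace B" "B \<subseteq> rows_in n Y"
    and r: "r \<le> vs.dim (A + B)"
  shows "\<exists>r1 r2. r1 \<le> vs.dim A \<and> r2 \<le> vs.dim B \<and> r1 + r2 = r \<and>
     Mr emb b m n A r1 + Mr emb b m n B r2 \<le> Mr emb b m n (A + B) r"
proof -
  have Av: "A \<subseteq> vecs n" and Bv: "B \<subseteq> vecs n" using A B rows_in_subset_vecs by blast+
  have AB: "A \<inter> B = {0}" using rows_in_inter[OF XY A(2) B(2)] A(1) B(1) vs.subspace_0 by blast
  obtain D where D: "vs.subspace D" "D \<subseteq> A + B" "vs.dim D = r"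
    "wtR_sp emb b m n D = Mr emb b m n (A + B) r"
    using Mr_attained[OF vs.subspace_set_plus[OF A(1) B(1)] set_plus_subset_vecs[OF Av Bv] r]
    by blast
  have lin: "linear_on sc D (proj_along A B)"
    using linear_on_subset[OF vs.linear_on_proj_along[OF A(1) B(1) AB] D(2)] .
  have "{x \<in> D. proj_along A B x = 0} = D \<inter> A"
    using vs.proj_along_kernel[OF A(1) B(1) AB] D(2) by blast
  then have dim: "r = vs.dim (D \<inter> A) + vs.dim (proj_along A B ` D)"
    using vs.rank_nullity[OF D(1) finitely_spanned_subset_vecs lin] D(2,3) set_plus_subset_vecs[OF Av Bv]
    by (metis order_trans)
  have D1: "vs.subspace (D \<inter> A)" "D \<inter> A \<subseteq> A" using vs.subspace_inter[OF D(1) A(1)] by auto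
  have D2: "vs.subspace (proj_along A B ` D)" "proj_along A B ` D \<subseteq> B"
    using vs.subspace_linear_on_image[OF D(1) lin] vs.proj_along_image[OF A(1) B(1) AB] D(2) by auto
  have "Mr emb b m n A (vs.dim (D \<inter> A)) + Mr emb b m n B (vs.dim (proj_along A B ` D))
      \<le> wtR_sp emb b m n (D \<inter> A) + wtR_sp emb b m n (proj_along A B ` D)"
    by (intro add_mono Mr_le_wtR_sp D1 D2 refl)
  also have "\<dots> \<le> Mr emb b m n (A + B) r"
    using wtR_sp_split[OF X Y XY Yv A B D(2)] D(4) by simp
  finally show ?thesis
    using dim vs.dim_mono_finitely_spanned finitely_spanned_subset_vecs Av Bv D1(2) D2(2) by metis
qed

lemma subspace_sum_sets:
  "(\<And>i. i \<in> I \<Longrightarrow> vs.subspace (A i)) \<Longrightarrow> vs.subspace (\<Sum>i\<in>I. A i)"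
  by (induction I rule: infinite_finite_induct) (auto intro: vs.subspace_set_plus)

lemma sum_sets_subset_rows_in:
  "(\<And>i. i \<in> I \<Longrightarrow> A i \<subseteq> rows_in n (U i)) \<Longrightarrow> (\<Sum>i\<in>I. A i) \<subseteq> rows_in n (\<Sum>i\<in>I. U i)"
proof (induction I rule: infinite_finite_induct)
  case (insert x F)
  then show ?case using rows_in_set_plus[of "A x" n "U x"] by simp
qed (simp_all add: zero_in_rows_in)

context
  fixes n t :: nat and U :: "nat \<Rightarrow> (nat \<Rightarrow> 'k) set" and A :: "nat \<Rightarrow> (nat \<Rightarrow> 'l) set"
  assumes U: "\<And>i. i < t \<Longrightarrow> vs.subspace (U i)" "\<And>i. i < t \<Longrightarrow> U i \<subseteq> vecs n"
    and indep: "\<And>i. i < t \<Longrightarrow> (\<Sum>j<i. U j) \<inter> U i = {0}"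
    and A: "\<And>i. i < t \<Longrightarrow> vs.subspace (A i)" "\<And>i. i < t \<Longrightarrow> A i \<subseteq> rows_in n (U i)"
begin

lemma partial_sums:
  assumes "j \<le> t"
  shows "vs.subspace (\<Sum>i<j. U i)" "vs.subspace (\<Sum>i<j. A i)"
    and "(\<Sum>i<j. A i) \<subseteq> rows_in n (\<Sum>i<j. U i)"
proof -
  show "vs.subspace (\<Sum>i<j. U i)" by (rule subspace_sum_sets) (use assms U(1) in simp)
  show "vs.subspace (\<Sum>i<j. A i)" by (rule subspace_sum_sets) (use assms A(1) in simp)
  show "(\<Sum>i<j. A i) \<subseteq> rows_in n (\<Sum>i<j. U i)"
    by (rule sum_sets_subset_rows_in) (use assms A(2) in simp)
qed

lemma dim_partial_sum: "j \<le> t \<Longrightarrow> vs.dim (\<Sum>i<j. A i) = (\<Sum>i<j. vs.dim (A i))"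
proof (induction j)
  case (Suc j)
  then have jt: "j < t" by simp
  note S = partial_sums[OF less_imp_le[OF jt]]
  have "(\<Sum>i<j. A i) \<inter> A j \<subseteq> {0}" by (rule rows_in_inter[OF indep[OF jt] S(3) A(2)[OF jt]])
  then have int: "(\<Sum>i<j. A i) \<inter> A j = {0}" using vs.subspace_0 S(2) A(1)[OF jt] by auto
  have "(\<Sum>i<j. A i) \<subseteq> vecs n" "A j \<subseteq> vecs n"
    using S(3) A(2)[OF jt] rows_in_subset_vecs by blast+
  then show ?case
    using vs.dim_direct_sum[OF S(2) A(1)[OF jt] int finitely_spanned_subset_vecs finitely_spanned_subset_vecs]
      Suc by simp
qed simp

lemma Mr_partial_sum_le:
  "j \<le> t \<Longrightarrow> \<forall>i<j. rr i \<le> vs.dim (A i) \<Longrightarrow>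
    Mr emb b m n (\<Sum>i<j. A i) (\<Sum>i<j. rr i) \<le> (\<Sum>i<j. Mr emb b m n (A i) (rr i))"
proof (induction j)
  case (Suc j)
  then have jt: "j < t" by simp
  note S = partial_sums[OF less_imp_le[OF jt]]
  have "(\<Sum>i<j. rr i) \<le> vs.dim (\<Sum>i<j. A i)"
    using Suc.prems by (auto simp: dim_partial_sum intro!: sum_mono)
  then have "Mr emb b m n (\<Sum>i<Suc j. A i) (\<Sum>i<Suc j. rr i)
      \<le> Mr emb b m n (\<Sum>i<j. A i) (\<Sum>i<j. rr i) + Mr emb b m n (A j) (rr j)"
    using Mr_set_plus_le[OF indep[OF jt] S(2,3) A(1,2)[OF jt]] Suc.prems by simp
  then show ?case using Suc by simp
qed simp

lemma Mr_partial_sum_split: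
  "j \<le> t \<Longrightarrow> r \<le> vs.dim (\<Sum>i<j. A i) \<Longrightarrow>
    \<exists>rr. (\<forall>i<j. rr i \<le> vs.dim (A i)) \<and> (\<Sum>i<j. rr i) = r
      \<and> (\<Sum>i<j. Mr emb b m n (A i) (rr i)) \<le> Mr emb b m n (\<Sum>i<j. A i) r"
proof (induction j arbitrary: r)
  case (Suc j)
  then have jt: "j < t" by simp
  note S = partial_sums[OF less_imp_le[OF jt]]
  have "r \<le> vs.dim ((\<Sum>i<j. A i) + A j)" using Suc.prems by simp
  from Mr_set_plus_split[OF S(1) U(1)[OF jt] indep[OF jt] U(2)[OF jt] S(2,3) A(1,2)[OF jt] this]
  obtain r1 r2 where r12: "r1 \<le> vs.dim (\<Sum>i<j. A i)" "r2 \<le> vs.dim (A j)" "r1 + r2 = r"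
    "Mr emb b m n (\<Sum>i<j. A i) r1 + Mr emb b m n (A j) r2 \<le> Mr emb b m n (\<Sum>i<Suc j. A i) r"
    by auto
  then obtain rr where rr: "\<forall>i<j. rr i \<le> vs.dim (A i)" "(\<Sum>i<j. rr i) = r1"
    "(\<Sum>i<j. Mr emb b m n (A i) (rr i)) \<le> Mr emb b m n (\<Sum>i<j. A i) r1"
    using Suc by auto
  have "(\<Sum>i<j. (rr(j := r2)) i) = (\<Sum>i<j. rr i)"
    "(\<Sum>i<j. Mr emb b m n (A i) ((rr(j := r2)) i)) = (\<Sum>i<j. Mr emb b m n (A i) (rr i))"
    by (auto intro: sum.cong)
  then show ?case
    using rr r12 by (intro exI[of _ "rr(j := r2)"]) (auto simp: less_Suc_eq)
qed auto

lemma Mr_sum_eq_Min_compositions: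
  assumes "r \<le> vs.dim (\<Sum>i<t. A i)"
  shows "compositions {..<t} (\<lambda>i. vs.dim (A i)) r \<noteq> {}"
    and "Mr emb b m n (\<Sum>i<t. A i) r
      = Min ((\<lambda>rr. \<Sum>i<t. Mr emb b m n (A i) (rr i)) ` compositions {..<t} (\<lambda>i. vs.dim (A i)) r)"
proof -
  let ?C = "compositions {..<t} (\<lambda>i. vs.dim (A i)) r"
  let ?f = "\<lambda>rr. \<Sum>i<t. Mr emb b m n (A i) (rr i)"
  obtain rr where rr: "\<forall>i<t. rr i \<le> vs.dim (A i)" "(\<Sum>i<t. rr i) = r"
    "?f rr \<le> Mr emb b m n (\<Sum>i<t. A i) r"
    using Mr_partial_sum_split[OF order_refl assms] by blast
  define rr' where "rr' i = (if i < t then rr i else 0)" for i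
  have rr': "rr' \<in> ?C" using rr(1,2) by (simp add: compositions_def rr'_def)
  then show ne: "?C \<noteq> {}" by blast
  have fin: "finite (?f ` ?C)" using finite_compositions[of "{..<t}"] by simp
  have "Min (?f ` ?C) \<le> ?f rr'" using rr' fin by (intro Min_le) auto
  also have "\<dots> \<le> Mr emb b m n (\<Sum>i<t. A i) r" using rr(3) by (simp add: rr'_def)
  finally have "Min (?f ` ?C) \<le> Mr emb b m n (\<Sum>i<t. A i) r" .
  moreover have "Mr emb b m n (\<Sum>i<t. A i) r \<le> ?f c" if "c \<in> ?C" for c
    using Mr_partial_sum_le[OF order_refl, of c] that by (auto simp: compositions_def)
  then have "Mr emb b m n (\<Sum>i<t. A i) r \<le> Min (?f ` ?C)"
    using fin ne by (intro Min.boundedI) auto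
  ultimately show "Mr emb b m n (\<Sum>i<t. A i) r = Min (?f ` ?C)" by simp
qed

end

end

section \<open>Polynomials evaluated at an endomorphism\<close>

declare plus_fun_apply [simp del] zero_fun_apply [simp del]

lemma module_hom_funpow:
  assumes "module_hom (sc :: 'a::field \<Rightarrow> (nat \<Rightarrow> 'a) \<Rightarrow> _) sc u"
  shows "module_hom (sc :: 'a::field \<Rightarrow> (nat \<Rightarrow> 'a) \<Rightarrow> _) sc (u ^^ k)"
  by (induction k) (use assms vs.module_axioms in \<open>simp_all add: module_hom_iff\<close>)

lemma poly_endo_eq_sum_lessThan:
  assumes "\<forall>k\<ge>N. coeff p k = 0"
  shows "poly_endo p u v = (\<Sum>k<N. sc (coeff p k) ((u ^^ k) v))"
proof -
  have "poly_endo p u v = (\<Sum>k<Suc (degree p). sc (coeff p k) ((u ^^ k) v))"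
    by (simp add: poly_endo_def lessThan_Suc_atMost)
  also have "\<dots> = (\<Sum>k<max N (Suc (degree p)). sc (coeff p k) ((u ^^ k) v))"
    by (rule sum.mono_neutral_left) (auto simp: coeff_eq_0)
  also have "\<dots> = (\<Sum>k<N. sc (coeff p k) ((u ^^ k) v))"
    by (rule sum.mono_neutral_right) (use assms in auto)
  finally show ?thesis .
qed

context
  fixes u :: "(nat \<Rightarrow> 'a::field) \<Rightarrow> (nat \<Rightarrow> 'a)"
  assumes u: "module_hom sc sc u"
begin

interpretation U: module_hom sc sc u by (rule u)

lemma poly_endo_0 [simp]: "poly_endo 0 u v = 0"
  by (simp add: poly_endo_def)

lemma poly_endo_1 [simp]: "poly_endo 1 u v = v"
  by (simp add: poly_endo_def)

lemma poly_endo_pCons: "poly_endo (pCons a p) u v = sc a v + u (poly_endo p u v)"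
proof -
  let ?N = "Suc (degree p)"
  have cp: "\<forall>k\<ge>?N. coeff p k = 0" by (auto simp: coeff_eq_0)
  then have "poly_endo (pCons a p) u v = (\<Sum>k<Suc ?N. sc (coeff (pCons a p) k) ((u ^^ k) v))"
    by (intro poly_endo_eq_sum_lessThan) (auto simp: coeff_pCons split: nat.splits)
  also have "\<dots> = sc a v + (\<Sum>k<?N. u (sc (coeff p k) ((u ^^ k) v)))"
    by (subst sum.lessThan_Suc_shift) (simp add: U.scale)
  also have "\<dots> = sc a v + u (\<Sum>k<?N. sc (coeff p k) ((u ^^ k) v))"
    by (simp only: U.sum)
  also have "\<dots> = sc a v + u (poly_endo p u v)"
    by (simp only: poly_endo_eq_sum_lessThan[OF cp])
  finally show ?thesis .
qed

lemma module_hom_poly_endo: "module_hom sc sc (poly_endo p u)"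
proof (induction p)
  case 0 then show ?case using vs.module_axioms by (simp add: module_hom_iff)
next
  case (pCons a p)
  interpret P: module_hom sc sc "poly_endo p u" by (rule pCons.IH)
  show ?case using vs.module_axioms
    by (simp add: module_hom_iff poly_endo_pCons U.add U.scale P.add P.scale vs.scale_right_distrib
        vs.scale_left_commute)
qed

lemma poly_endo_add: "poly_endo (p + q) u v = poly_endo p u v + poly_endo q u v"
proof (induction p arbitrary: q)
  case (pCons a p)
  show ?case
  proof (cases q rule: pCons_cases)
    case (pCons b q')
    show ?thesis using pCons.IH[of q'] unfolding pCons
      by (simp add: poly_endo_pCons U.add vs.scale_left_distrib algebra_simps)
  qed
qed simp

lemma poly_endo_smult: "poly_endo (smult c p) u v = sc c (poly_endo p u v)"
  by (induction p) (simp_all add: poly_endo_pCons U.scale vs.scale_right_distrib)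

lemma poly_endo_mult: "poly_endo (p * q) u v = poly_endo p u (poly_endo q u v)"
  by (induction p) (simp_all add: poly_endo_add poly_endo_smult poly_endo_pCons)

lemma poly_endo_monom: "poly_endo (monom 1 j) u v = (u ^^ j) v"
  by (induction j arbitrary: v) (simp_all add: monom_0 one_pCons[symmetric] monom_Suc poly_endo_pCons)

lemma poly_endo_funpow: "poly_endo p u ((u ^^ j) v) = (u ^^ j) (poly_endo p u v)"
  using poly_endo_mult[of p "monom 1 j"] poly_endo_mult[of "monom 1 j" p]
  by (simp add: poly_endo_monom mult.commute)

lemma poly_endo_mod:
  assumes "poly_endo T u w = 0"
  shows "poly_endo q u w = poly_endo (q mod T) u w"
proof -
  have "poly_endo q u w = poly_endo ((q div T) * T) u w + poly_endo (q mod T) u w"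
    by (metis div_mult_mod_eq poly_endo_add)
  also have "poly_endo ((q div T) * T) u w = 0"
    using assms module_hom_poly_endo[of "q div T"] by (simp add: poly_endo_mult module_hom.zero)
  finally show ?thesis by simp
qed

lemma poly_endo_in_invariant_subspace:
  assumes "vs.subspace V" "u ` V \<subseteq> V" "w \<in> V"
  shows "poly_endo p u w \<in> V"
  by (induction p)
    (use assms in \<open>simp_all add: poly_endo_pCons vs.subspace_0 vs.subspace_add vs.subspace_scale
      image_subset_iff\<close>)

end

section \<open>Matrices acting on row vectors\<close>

lemma module_hom_vecmatT: "module_hom sc sc (\<lambda>v. vecmatT n v (A :: nat \<Rightarrow> nat \<Rightarrow> 'a::field))"
  by (rule module_hom_scI)
    (auto simp: vecmatT_def fun_eq_iff sc_apply distrib_right sum.distrib sum_distrib_left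
      mult.assoc plus_fun_apply)

lemma vecmatT_in_vecs: "vecmatT n v A \<in> vecs n"
  by (simp add: vecmatT_def vecs_def)

lemma vecmatT_mat_mult:
  "vecmatT n c (mat_mult n X A) = vecmatT n (vecmatT n c A) (X :: nat \<Rightarrow> nat \<Rightarrow> 'a::field)"
proof (rule ext)
  fix j
  show "vecmatT n c (mat_mult n X A) j = vecmatT n (vecmatT n c A) X j"
  proof (cases "j < n")
    case True
    have "vecmatT n c (mat_mult n X A) j = (\<Sum>l<n. \<Sum>k<n. X j k * (c l * A k l))"
      using True by (simp add: vecmatT_def mat_mult_def sum_distrib_left mult.left_commute)
    also have "\<dots> = (\<Sum>k<n. X j k * vecmatT n c A k)"
      by (subst sum.swap) (simp add: vecmatT_def sum_distrib_left)
    finally show ?thesis using True by (simp add: vecmatT_def mult.commute)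
  qed (simp add: vecmatT_def)
qed

lemma vecmatT_mat_id: "c \<in> vecs n \<Longrightarrow> vecmatT n c mat_id = (c :: nat \<Rightarrow> 'a::field)"
  by (rule ext) (auto simp: vecmatT_def mat_id_def vecs_def if_distrib cong: if_cong)

lemma vecmatT_mat_pow:
  "c \<in> vecs n \<Longrightarrow>
    vecmatT n c (mat_pow n A k) = ((\<lambda>v. vecmatT n v (A :: nat \<Rightarrow> nat \<Rightarrow> 'a::field)) ^^ k) c"
proof (induction k arbitrary: c)
  case (Suc k)
  have "vecmatT n c (mat_pow n A (Suc k)) = ((\<lambda>v. vecmatT n v A) ^^ k) (vecmatT n c A)"
    using Suc.IH[OF vecmatT_in_vecs] by (simp add: vecmatT_mat_mult)
  then show ?case by (simp only: funpow_Suc_right comp_def)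
qed (simp add: vecmatT_mat_id)

lemma funpow_vecmatT_in_vecs: "c \<in> vecs n \<Longrightarrow> ((\<lambda>v. vecmatT n v A) ^^ k) c \<in> vecs n"
  by (cases k) (simp_all add: vecmatT_in_vecs)

lemma vecmatT_poly_mat:
  assumes c: "c \<in> vecs n"
  shows "vecmatT n c (poly_mat n p A) = poly_endo p (\<lambda>v. vecmatT n v (A :: nat \<Rightarrow> nat \<Rightarrow> 'a::field)) c"
proof (rule ext)
  fix j
  let ?u = "\<lambda>v. vecmatT n v A"
  have pe: "poly_endo p ?u c j = (\<Sum>k\<le>degree p. coeff p k * (?u ^^ k) c j)"
    by (simp add: poly_endo_def sum_apply sc_apply)
  show "vecmatT n c (poly_mat n p A) j = poly_endo p ?u c j"
  proof (cases "j < n")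
    case True
    then have "vecmatT n c (poly_mat n p A) j
        = (\<Sum>k\<le>degree p. coeff p k * vecmatT n c (mat_pow n A k) j)"
      by (simp add: vecmatT_def poly_mat_def sum_distrib_left mult.left_commute
          sum.swap[of _ "{..<n}"])
    then show ?thesis using vecmatT_mat_pow[OF c] pe by simp
  next
    case False
    then show ?thesis
      using funpow_vecmatT_in_vecs[OF c] pe by (simp add: vecmatT_def vecs_def)
  qed
qed

context extension_basis
begin

definition emb_vec :: "(nat \<Rightarrow> 'k) \<Rightarrow> (nat \<Rightarrow> 'l)" where
  "emb_vec v = (\<lambda>j. emb (v j))"

lemma emb_vec_add: "emb_vec (x + y) = emb_vec x + emb_vec y"
  by (simp add: emb_vec_def fun_eq_iff emb_add plus_fun_apply)

lemma emb_vec_sc: "emb_vec (sc a x) = sc (emb a) (emb_vec x)"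
  by (simp add: emb_vec_def fun_eq_iff emb_mult sc_apply)

lemma emb_vec_zero [simp]: "emb_vec 0 = 0"
  by (simp add: emb_vec_def zero_fun_def)

lemma emb_vec_sum: "emb_vec (\<Sum>i\<in>I. f i) = (\<Sum>i\<in>I. emb_vec (f i))"
  by (induction I rule: infinite_finite_induct) (simp_all add: emb_vec_add)

lemma emb_vec_in_vecs: "v \<in> vecs n \<Longrightarrow> emb_vec v \<in> vecs n"
  by (simp add: emb_vec_def vecs_def)

lemma vecmatT_lift_mat: "vecmatT n (emb_vec v) (lift_mat M) = emb_vec (vecmatT n v M)"
  by (simp add: vecmatT_def emb_vec_def fun_eq_iff emb_sum emb_mult)

lemma funpow_vecmatT_lift_mat:
  "((\<lambda>c. vecmatT n c (lift_mat M)) ^^ k) (emb_vec v) = emb_vec (((\<lambda>v. vecmatT n v M) ^^ k) v)"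
  by (induction k) (simp_all add: vecmatT_lift_mat)

lemma poly_endo_lift_mat:
  "poly_endo (map_poly emb q) (\<lambda>c. vecmatT n c (lift_mat M)) (emb_vec v)
     = emb_vec (poly_endo q (\<lambda>v. vecmatT n v M) v)"
proof (induction q)
  case (pCons a q)
  then show ?case
    by (simp add: map_poly_pCons poly_endo_pCons[OF module_hom_vecmatT] vecmatT_lift_mat
        emb_vec_add emb_vec_sc)
qed (simp add: poly_endo_0[OF module_hom_vecmatT])

lemma mat_apply_lift_emb_vec:
  "mat_apply n n' (lift_mat A) (emb_vec x) = emb_vec (mat_apply n n' A x)"
  by (simp add: mat_apply_def emb_vec_def fun_eq_iff emb_sum emb_mult)

lemma vecs_eq_sum_coord_rows:
  assumes "c \<in> vecs n"
  shows "c = (\<Sum>s<m. sc (b s) (emb_vec (coord_row n c s)))"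
proof (rule ext)
  fix l
  show "c l = (\<Sum>s<m. sc (b s) (emb_vec (coord_row n c s))) l"
  proof (cases "l < n")
    case True
    then show ?thesis using coord_spec[of "c l"]
      by (simp add: sum_apply sc_apply emb_vec_def coord_row_def mult.commute)
  qed (use assms in \<open>simp add: sum_apply sc_apply emb_vec_def coord_row_def vecs_def\<close>)
qed

end

section \<open>Coefficient vectors of polynomials\<close>

definition poly_of_vec :: "nat \<Rightarrow> (nat \<Rightarrow> 'a::comm_ring_1) \<Rightarrow> 'a poly" where
  "poly_of_vec d a = (\<Sum>j<d. monom (a j) j)"

lemma coeff_poly_of_vec: "coeff (poly_of_vec d a) k = (if k < d then a k else 0)"
  by (simp add: poly_of_vec_def coeff_sum)

lemma coeff_poly_of_vec_in_vecs: "a \<in> vecs d \<Longrightarrow> coeff (poly_of_vec d a) = a"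
  by (auto simp: coeff_poly_of_vec vecs_def fun_eq_iff)

lemma poly_of_vec_coeff: "\<forall>k\<ge>d. coeff p k = 0 \<Longrightarrow> poly_of_vec d (coeff p) = p"
  by (rule poly_eqI) (auto simp: coeff_poly_of_vec)

lemma coeff_in_vecs_iff: "coeff p \<in> vecs d \<longleftrightarrow> (\<forall>k\<ge>d. coeff p k = 0)"
  by (simp add: vecs_def)

lemma poly_of_vec_add: "poly_of_vec d (a + b) = poly_of_vec d a + poly_of_vec d (b :: nat \<Rightarrow> 'a::comm_ring_1)"
  by (rule poly_eqI) (simp add: coeff_poly_of_vec plus_fun_apply)

lemma poly_of_vec_sc: "poly_of_vec d (sc c a) = smult c (poly_of_vec d (a :: nat \<Rightarrow> 'a::field))"
  by (rule poly_eqI) (simp add: coeff_poly_of_vec sc_apply)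

lemma degree_poly_of_vec: "poly_of_vec d a \<noteq> 0 \<Longrightarrow> degree (poly_of_vec d a) < d"
  by (metis coeff_poly_of_vec leading_coeff_0_iff not_less)

lemma coeff_mod_in_vecs: "T \<noteq> 0 \<Longrightarrow> coeff (q mod T) \<in> vecs (degree (T :: 'a::field poly))"
  using degree_mod_less[of T q] by (auto simp: vecs_def intro: coeff_eq_0)

lemma coeff_mult_in_vecs:
  assumes "coeff p \<in> vecs a" "coeff q \<in> vecs c" "a \<ge> 1"
  shows "coeff (p * q) \<in> vecs (a + c - 1 :: nat)"
  unfolding vecs_def coeff_mult
proof (intro CollectI allI impI sum.neutral ballI)
  fix k i assume "a + c - 1 \<le> k" "i \<in> {..k}"
  then have "a \<le> i \<or> c \<le> k - i" by auto
  then show "coeff p i * coeff q (k - i) = 0" using assms by (auto simp: vecs_def)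
qed

section \<open>The \<open>\<Theta>\<close>-polynomial code generated by \<open>\<Theta> div gcd P \<Theta>\<close>\<close>

locale monic_modulus =
  fixes T :: "'l::field_gcd poly" and P :: "'l poly"
  assumes monic: "lead_coeff T = 1"
begin

abbreviation G :: "'l poly" where "G \<equiv> gcd P T"
abbreviation g :: "'l poly" where "g \<equiv> T div gcd P T"

lemma T_nonzero: "T \<noteq> 0"
  using monic by auto

lemma T_eq: "g * G = T"
  by simp

lemma G_nonzero: "G \<noteq> 0"
  using T_nonzero by simp

lemma g_nonzero: "g \<noteq> 0"
proof
  assume "g = 0"
  then show False using T_eq T_nonzero by simp
qed

lemma degree_T: "degree T = degree g + degree G"
  using degree_mult_eq[OF g_nonzero G_nonzero] T_eq by simp

lemma T_dvd_P_mult_g: "T dvd P * g"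
proof -
  have "P * g = ((P div G) * G) * g" by simp
  also have "\<dots> = (P div G) * (g * G)" by (simp only: ac_simps)
  finally show ?thesis using T_eq by simp
qed

lemma g_dvd_of_T_dvd: "T dvd P * r \<Longrightarrow> g dvd r"
proof -
  assume T_dvd: "T dvd P * r"
  have "(P div G) * r * G = ((P div G) * G) * r" by (simp only: ac_simps)
  also have "\<dots> = P * r" by simp
  finally have eq: "(P div G) * r * G = P * r" .
  have "g * G dvd (P div G) * r * G" unfolding eq T_eq by (rule T_dvd)
  then have "g dvd (P div G) * r" using G_nonzero dvd_mult_cancel_right by blast
  moreover have "coprime (P div G) g" using div_gcd_coprime[of P T] T_nonzero by simp
  ultimately show "g dvd r" by (simp add: coprime_commute coprime_dvd_mult_right_iff)
qed

lemma poly_code_eq: "poly_code T g = {c \<in> vecs (degree T). T dvd P * poly_of_vec (degree T) c}"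
proof safe
  fix c assume "c \<in> poly_code T g"
  then obtain Q where c: "c = coeff ((g * Q) mod T)" by (auto simp: poly_code_def)
  then show c_vecs: "c \<in> vecs (degree T)" using coeff_mod_in_vecs[OF T_nonzero] by simp
  have "poly_of_vec (degree T) c = (g * Q) mod T"
    using c c_vecs by (simp add: poly_of_vec_coeff coeff_in_vecs_iff)
  moreover have "(P * ((g * Q) mod T)) mod T = 0"
    using T_dvd_P_mult_g by (simp add: mod_mult_right_eq mult.assoc[symmetric])
  ultimately show "T dvd P * poly_of_vec (degree T) c" by (simp add: dvd_eq_mod_eq_0)
next
  fix c assume c: "c \<in> vecs (degree T)" "T dvd P * poly_of_vec (degree T) c"
  obtain Q where Q: "poly_of_vec (degree T) c = g * Q" using g_dvd_of_T_dvd[OF c(2)] by blast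
  have "(g * Q) mod T = g * Q"
    using degree_poly_of_vec[of "degree T" c] Q by (cases "g * Q = 0") (auto intro: mod_poly_less)
  then have "c = coeff ((g * Q) mod T)" using coeff_poly_of_vec_in_vecs[OF c(1)] Q by simp
  then show "c \<in> poly_code T g" by (auto simp: poly_code_def)
qed

lemma poly_code_subset_vecs: "poly_code T g \<subseteq> vecs (degree T)"
  using poly_code_eq by auto

lemma mem_poly_code_iff:
  "c \<in> vecs (degree T) \<Longrightarrow> c \<in> poly_code T g \<longleftrightarrow> (P * poly_of_vec (degree T) c) mod T = 0"
  using poly_code_eq by (auto simp: dvd_eq_mod_eq_0)

definition gen_mult :: "(nat \<Rightarrow> 'l) \<Rightarrow> nat \<Rightarrow> 'l" where
  "gen_mult q = coeff (g * poly_of_vec (degree G) q)"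

lemma module_hom_gen_mult: "module_hom sc sc gen_mult"
  by (rule module_hom_scI)
    (simp_all add: gen_mult_def poly_of_vec_add poly_of_vec_sc distrib_left fun_eq_iff sc_apply
      plus_fun_apply)

lemma gen_mult_in_vecs:
  assumes "r \<le> degree G" "q \<in> vecs r"
  shows "gen_mult q \<in> vecs (degree T - degree G + r)"
proof -
  have "poly_of_vec (degree G) q = poly_of_vec r q"
    using assms by (auto intro!: poly_eqI simp: coeff_poly_of_vec vecs_def)
  moreover have "coeff (g * poly_of_vec r q) \<in> vecs (Suc (degree g) + r - 1)"
    by (rule coeff_mult_in_vecs) (auto simp: vecs_def coeff_poly_of_vec intro: coeff_eq_0)
  ultimately show ?thesis using degree_T by (simp add: gen_mult_def)
qed

lemma inj_on_gen_mult: "inj_on gen_mult (vecs (degree G))"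
proof (rule inj_onI)
  fix x y assume xy: "x \<in> vecs (degree G)" "y \<in> vecs (degree G)" "gen_mult x = gen_mult y"
  then have "poly_of_vec (degree G) x = poly_of_vec (degree G) y"
    using g_nonzero by (simp add: gen_mult_def coeff_inject)
  then show "x = y" using coeff_poly_of_vec_in_vecs xy(1,2) by metis
qed

lemma poly_code_eq_image_gen_mult: "poly_code T g = gen_mult ` vecs (degree G)"
proof safe
  fix c assume "c \<in> poly_code T g"
  then have c: "c \<in> vecs (degree T)" "T dvd P * poly_of_vec (degree T) c" using poly_code_eq by auto
  obtain Q where Q: "poly_of_vec (degree T) c = g * Q" using g_dvd_of_T_dvd[OF c(2)] by blast
  have "\<forall>k\<ge>degree G. coeff Q k = 0"
  proof (cases "Q = 0")
    case False
    then have "degree Q < degree G"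
      using degree_poly_of_vec[of "degree T" c] Q g_nonzero degree_T by (auto simp: degree_mult_eq)
    then show ?thesis by (auto intro: coeff_eq_0)
  qed simp
  then have "gen_mult (coeff Q) = c"
    using Q coeff_poly_of_vec_in_vecs[OF c(1)] by (simp add: gen_mult_def poly_of_vec_coeff)
  then show "c \<in> gen_mult ` vecs (degree G)"
    using \<open>\<forall>k\<ge>degree G. coeff Q k = 0\<close> by (metis coeff_in_vecs_iff image_eqI)
next
  fix q :: "nat \<Rightarrow> 'l" assume q: "q \<in> vecs (degree G)"
  then have c: "gen_mult q \<in> vecs (degree T)" using gen_mult_in_vecs[OF order_refl] degree_T by simp
  then have "poly_of_vec (degree T) (gen_mult q) = g * poly_of_vec (degree G) q"
    by (simp add: gen_mult_def poly_of_vec_coeff coeff_in_vecs_iff)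
  then show "gen_mult q \<in> poly_code T g"
    using c T_dvd_P_mult_g poly_code_eq by (auto simp: mult.assoc[symmetric])
qed

lemma subspace_poly_code: "vs.subspace (poly_code T g)"
  unfolding poly_code_eq_image_gen_mult
  by (rule module_hom.subspace_image[OF module_hom_gen_mult subspace_vecs])

lemma dim_poly_code: "vs.dim (poly_code T g) = degree G"
  unfolding poly_code_eq_image_gen_mult
  using vs.dim_image_inj_on[OF subspace_vecs finitely_spanned_vecs
      linear_on_module_hom[OF module_hom_gen_mult] inj_on_gen_mult] dim_vecs by simp

lemma low_degree_subcode:
  assumes "r \<le> degree G"
  shows "vs.subspace (gen_mult ` vecs r)" "gen_mult ` vecs r \<subseteq> poly_code T g"
    "vs.dim (gen_mult ` vecs r) = r" "gen_mult ` vecs r \<subseteq> vecs (degree T - degree G + r)"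
proof -
  have sub: "vecs r \<subseteq> vecs (degree G)" using assms by (rule vecs_mono)
  show "vs.subspace (gen_mult ` vecs r)"
    by (rule module_hom.subspace_image[OF module_hom_gen_mult subspace_vecs])
  show "gen_mult ` vecs r \<subseteq> poly_code T g" using sub poly_code_eq_image_gen_mult by auto
  show "vs.dim (gen_mult ` vecs r) = r"
    using vs.dim_image_inj_on[OF subspace_vecs finitely_spanned_vecs
        linear_on_module_hom[OF module_hom_gen_mult] inj_on_subset[OF inj_on_gen_mult sub]]
      dim_vecs by simp
  show "gen_mult ` vecs r \<subseteq> vecs (degree T - degree G + r)"
    using gen_mult_in_vecs[OF assms] by auto
qed

end

lemma Mr_poly_code_le:
  fixes T P :: "'l::field_gcd poly"
  assumes "extension_basis emb b m" "lead_coeff T = 1" "r \<le> degree (gcd P T)"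
  shows "Mr emb b m (degree T) (poly_code T (T div gcd P T)) r \<le> degree T - degree (gcd P T) + r"
proof -
  interpret monic_modulus T P by (rule monic_modulus.intro[OF assms(2)])
  show ?thesis
    using extension_basis.Mr_le_of_subset_vecs[OF assms(1) low_degree_subcode[OF assms(3)]] .
qed

section \<open>A cyclic block\<close>

text \<open>Maps the coefficient vector of a polynomial \<open>a\<close> to \<open>a(M) w\<close>, identifying \<open>\<K>[x]/(\<Theta>)\<close>
  with the cyclic subspace generated by \<open>w\<close>.\<close>

definition orbit_mat :: "nat \<Rightarrow> (nat \<Rightarrow> nat \<Rightarrow> 'a::comm_ring_1) \<Rightarrow> (nat \<Rightarrow> 'a) \<Rightarrow> nat \<Rightarrow> nat \<Rightarrow> 'a" where
  "orbit_mat n M w = (\<lambda>l j. (((\<lambda>v. vecmatT n v M) ^^ j) w) l)"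

locale cyclic_block = extension_basis emb b m
  for emb :: "'k::field \<Rightarrow> 'l::field_gcd" and b m +
  fixes n :: nat and M :: "nat \<Rightarrow> nat \<Rightarrow> 'k" and V :: "(nat \<Rightarrow> 'k) set"
    and \<Theta> :: "'k poly" and w :: "nat \<Rightarrow> 'k"
  assumes V: "vs.subspace V" "V \<subseteq> vecs n"
    and invariant: "(\<lambda>v. vecmatT n v M) ` V \<subseteq> V"
    and generator: "w \<in> V" "vs.span ((\<lambda>j. ((\<lambda>v. vecmatT n v M) ^^ j) w) ` {..<vs.dim V}) = V"
    and min_poly: "is_min_poly V (\<lambda>v. vecmatT n v M) \<Theta>"
begin

abbreviation uK :: "(nat \<Rightarrow> 'k) \<Rightarrow> nat \<Rightarrow> 'k" where
  "uK \<equiv> \<lambda>v. vecmatT n v M"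

abbreviation uL :: "(nat \<Rightarrow> 'l) \<Rightarrow> nat \<Rightarrow> 'l" where
  "uL \<equiv> \<lambda>c. vecmatT n c (lift_mat M)"

abbreviation orbit_map :: "(nat \<Rightarrow> 'k) \<Rightarrow> nat \<Rightarrow> 'k" where
  "orbit_map \<equiv> mat_apply n (degree \<Theta>) (orbit_mat n M w)"

abbreviation orbit_map_L :: "(nat \<Rightarrow> 'l) \<Rightarrow> nat \<Rightarrow> 'l" where
  "orbit_map_L \<equiv> mat_apply n (degree \<Theta>) (lift_mat (orbit_mat n M w))"

lemma \<Theta>_monic: "lead_coeff \<Theta> = 1"
  using min_poly by (simp add: is_min_poly_def)

lemma funpow_generator_in_V: "(uK ^^ j) w \<in> V"
  by (induction j) (use generator(1) invariant in auto)

lemma orbit_map_eq_poly_endo: "orbit_map a = poly_endo (poly_of_vec (degree \<Theta>) a) uK w"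
proof -
  have pe: "poly_endo (poly_of_vec (degree \<Theta>) a) uK w = (\<Sum>k<degree \<Theta>. sc (a k) ((uK ^^ k) w))"
    using poly_endo_eq_sum_lessThan[of "degree \<Theta>" "poly_of_vec (degree \<Theta>) a"]
    by (simp add: coeff_poly_of_vec)
  show ?thesis
  proof (rule ext)
    fix l
    have "(uK ^^ k) w l = 0" if "\<not> l < n" for k
      using funpow_generator_in_V[of k] V(2) that by (auto simp: vecs_def)
    then show "orbit_map a l = poly_endo (poly_of_vec (degree \<Theta>) a) uK w l"
      by (cases "l < n") (auto simp: pe mat_apply_def orbit_mat_def sum_apply sc_apply mult.commute)
  qed
qed

lemma poly_endo_vanishes_on_V:
  assumes "poly_endo p uK w = 0" "v \<in> V"
  shows "poly_endo p uK v = 0"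
proof -
  interpret PE: module_hom sc sc "poly_endo p uK" by (rule module_hom_poly_endo[OF module_hom_vecmatT])
  have "poly_endo p uK ((uK ^^ j) w) = 0" for j
    using assms(1) module_hom.zero[OF module_hom_funpow[OF module_hom_vecmatT, of j]]
    by (simp add: poly_endo_funpow[OF module_hom_vecmatT])
  then show ?thesis
    using vs.span_induct[of v _ "\<lambda>v. poly_endo p uK v = 0"] assms(2) generator(2) PE.subspace_kernel
    by auto
qed

lemma inj_on_orbit_map: "inj_on orbit_map (vecs (degree \<Theta>))"
proof (rule inj_onI)
  interpret O: module_hom sc sc orbit_map by (rule module_hom_mat_apply)
  fix x y assume xy: "x \<in> vecs (degree \<Theta>)" "y \<in> vecs (degree \<Theta>)" "orbit_map x = orbit_map y"
  let ?p = "poly_of_vec (degree \<Theta>) (x - y)"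
  have "poly_endo ?p uK w = 0" using xy O.diff by (simp add: orbit_map_eq_poly_endo[symmetric])
  then have "\<Theta> dvd ?p" using min_poly poly_endo_vanishes_on_V by (simp add: is_min_poly_def)
  have "?p = 0"
  proof (rule ccontr)
    assume "?p \<noteq> 0"
    then show False
      using degree_poly_of_vec[of "degree \<Theta>" "x - y"] dvd_imp_degree_le[OF \<open>\<Theta> dvd ?p\<close>] by simp
  qed
  moreover have "x - y \<in> vecs (degree \<Theta>)" using xy by (simp add: vecs_def)
  ultimately have "x - y = coeff 0" using coeff_poly_of_vec_in_vecs by metis
  then have "x - y = 0" by (simp add: fun_eq_iff zero_fun_def)
  then show "x = y" by simp
qed

lemma orbit_map_in_V: "orbit_map a \<in> V"
  unfolding orbit_map_eq_poly_endo
  by (rule poly_endo_in_invariant_subspace[OF module_hom_vecmatT V(1) invariant generator(1)])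

lemma V_subset_image_orbit_map: "V \<subseteq> orbit_map ` vecs (degree \<Theta>)"
proof -
  let ?Q = "range (\<lambda>q. poly_endo q uK w)"
  have sub: "vs.subspace ?Q"
    unfolding vs.subspace_def
  proof (intro conjI ballI allI)
    show "0 \<in> ?Q" using poly_endo_0[OF module_hom_vecmatT] by (metis rangeI)
  next
    fix x y assume "x \<in> ?Q" "y \<in> ?Q"
    then show "x + y \<in> ?Q" by (auto simp: poly_endo_add[OF module_hom_vecmatT, symmetric])
  next
    fix c x assume "x \<in> ?Q"
    then show "sc c x \<in> ?Q" by (auto simp: poly_endo_smult[OF module_hom_vecmatT, symmetric])
  qed
  have "(\<lambda>j. (uK ^^ j) w) ` {..<vs.dim V} \<subseteq> ?Q"
    by (auto simp: poly_endo_monom[OF module_hom_vecmatT, symmetric])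
  then have "vs.span ((\<lambda>j. (uK ^^ j) w) ` {..<vs.dim V}) \<subseteq> ?Q" by (rule vs.span_minimal[OF _ sub])
  then have "V \<subseteq> ?Q" using generator(2) by simp
  moreover have "poly_endo q uK w \<in> orbit_map ` vecs (degree \<Theta>)" for q
  proof -
    have \<Theta>0: "\<Theta> \<noteq> 0" using \<Theta>_monic by auto
    have "poly_endo \<Theta> uK w = 0" using min_poly generator(1) by (simp add: is_min_poly_def)
    then have "poly_endo q uK w = poly_endo (q mod \<Theta>) uK w"
      by (rule poly_endo_mod[OF module_hom_vecmatT])
    also have "\<dots> = orbit_map (coeff (q mod \<Theta>))"
      using coeff_mod_in_vecs[OF \<Theta>0]
      by (simp add: orbit_map_eq_poly_endo poly_of_vec_coeff coeff_in_vecs_iff)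
    finally show ?thesis using coeff_mod_in_vecs[OF \<Theta>0] by blast
  qed
  ultimately show ?thesis by blast
qed

lemma degree_map_poly_\<Theta>: "degree (map_poly emb \<Theta>) = degree \<Theta>"
  by (rule degree_map_poly) (simp add: \<Theta>_monic)

lemma lead_coeff_map_poly_\<Theta>: "lead_coeff (map_poly emb \<Theta>) = 1"
  using \<Theta>_monic by (simp add: degree_map_poly_\<Theta> coeff_map_poly)

lemma orbit_map_L_eq_poly_endo:
  "orbit_map_L c = poly_endo (poly_of_vec (degree \<Theta>) c) uL (emb_vec w)"
proof -
  have pe: "poly_endo (poly_of_vec (degree \<Theta>) c) uL (emb_vec w)
      = (\<Sum>k<degree \<Theta>. sc (c k) (emb_vec ((uK ^^ k) w)))"
    using poly_endo_eq_sum_lessThan[of "degree \<Theta>" "poly_of_vec (degree \<Theta>) c"]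
    by (simp add: coeff_poly_of_vec funpow_vecmatT_lift_mat)
  show ?thesis
  proof (rule ext)
    fix l
    have "(uK ^^ k) w l = 0" if "\<not> l < n" for k
      using funpow_generator_in_V[of k] V(2) that by (auto simp: vecs_def)
    then show "orbit_map_L c l = poly_endo (poly_of_vec (degree \<Theta>) c) uL (emb_vec w) l"
      unfolding pe by (cases "l < n")
        (auto simp: mat_apply_def orbit_mat_def sum_apply sc_apply emb_vec_def mult.commute)
  qed
qed

lemma poly_endo_orbit_map_L:
  "poly_endo P uL (orbit_map_L c)
    = orbit_map_L (coeff ((P * poly_of_vec (degree \<Theta>) c) mod map_poly emb \<Theta>))"
proof -
  have \<Theta>0: "map_poly emb \<Theta> \<noteq> 0" using lead_coeff_map_poly_\<Theta> by auto
  have ann: "poly_endo (map_poly emb \<Theta>) uL (emb_vec w) = 0"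
    using poly_endo_lift_mat[of \<Theta> n M w] min_poly generator(1) by (simp add: is_min_poly_def)
  have "poly_endo P uL (orbit_map_L c) = poly_endo (P * poly_of_vec (degree \<Theta>) c) uL (emb_vec w)"
    by (simp add: orbit_map_L_eq_poly_endo poly_endo_mult[OF module_hom_vecmatT])
  also have "\<dots> = poly_endo ((P * poly_of_vec (degree \<Theta>) c) mod map_poly emb \<Theta>) uL (emb_vec w)"
    by (rule poly_endo_mod[OF module_hom_vecmatT ann])
  also have "\<dots> = orbit_map_L (coeff ((P * poly_of_vec (degree \<Theta>) c) mod map_poly emb \<Theta>))"
    using coeff_mod_in_vecs[OF \<Theta>0]
    by (simp add: orbit_map_L_eq_poly_endo poly_of_vec_coeff coeff_in_vecs_iff degree_map_poly_\<Theta>)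
  finally show ?thesis .
qed

lemma inj_on_orbit_map_L: "inj_on orbit_map_L (vecs (degree \<Theta>))"
  by (rule inj_on_mat_apply_lift[OF inj_on_orbit_map])

lemma orbit_map_L_in_rows_in: "orbit_map_L c \<in> rows_in n V"
  using orbit_map_in_V by (simp add: rows_in_def mat_apply_in_vecs coord_row_mat_apply_lift)

end

section \<open>Decomposition of the kernel code along the cyclic blocks\<close>

locale block_decomposition = extension_basis emb b m
  for emb :: "'k::field \<Rightarrow> 'l::field_gcd" and b m +
  fixes n t :: nat and M :: "nat \<Rightarrow> nat \<Rightarrow> 'k" and V :: "nat \<Rightarrow> (nat \<Rightarrow> 'k) set"
    and \<Theta> :: "nat \<Rightarrow> 'k poly" and w :: "nat \<Rightarrow> nat \<Rightarrow> 'k" and P :: "'l poly"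
  assumes block: "\<And>i. i < t \<Longrightarrow> cyclic_block emb b m n M (V i) (\<Theta> i) (w i)"
    and direct_sum: "\<forall>v\<in>vecs n. \<exists>!f. (\<forall>i. i \<ge> t \<longrightarrow> f i = 0) \<and> (\<forall>i<t. f i \<in> V i) \<and> v = (\<Sum>i<t. f i)"
begin

abbreviation orbit :: "nat \<Rightarrow> (nat \<Rightarrow> 'k) \<Rightarrow> nat \<Rightarrow> 'k" where
  "orbit i \<equiv> mat_apply n (degree (\<Theta> i)) (orbit_mat n M (w i))"

abbreviation embed :: "nat \<Rightarrow> (nat \<Rightarrow> 'l) \<Rightarrow> nat \<Rightarrow> 'l" where
  "embed i \<equiv> mat_apply n (degree (\<Theta> i)) (lift_mat (orbit_mat n M (w i)))"

abbreviation block_code :: "nat \<Rightarrow> (nat \<Rightarrow> 'l) set" where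
  "block_code i \<equiv> poly_code (map_poly emb (\<Theta> i)) (map_poly emb (\<Theta> i) div gcd P (map_poly emb (\<Theta> i)))"

abbreviation kernel_code :: "(nat \<Rightarrow> 'l) set" where
  "kernel_code \<equiv> {c \<in> vecs n. vecmatT n c (poly_mat n P (lift_mat M)) = 0}"

lemma V_subspace: "i < t \<Longrightarrow> vs.subspace (V i)" "i < t \<Longrightarrow> V i \<subseteq> vecs n"
  using cyclic_block.V[OF block] by auto

lemma monic_modulus_block: "i < t \<Longrightarrow> monic_modulus (map_poly emb (\<Theta> i))"
  using cyclic_block.lead_coeff_map_poly_\<Theta>[OF block] by (simp add: monic_modulus_def)

lemma direct_sum_eq_0:
  assumes "\<forall>i<t. f i \<in> V i" "(\<Sum>i<t. f i) = 0"
  shows "\<forall>i<t. f i = 0"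
proof (intro allI impI)
  fix i assume "i < t"
  let ?Q = "\<lambda>h. (\<forall>i. i \<ge> t \<longrightarrow> h i = 0) \<and> (\<forall>i<t. h i \<in> V i) \<and> 0 = (\<Sum>i<t. h i)"
  let ?f = "\<lambda>i. if i < t then f i else 0"
  have "\<exists>!h. ?Q h" by (rule bspec[OF direct_sum zero_in_vecs])
  then have uniq: "Uniq ?Q" by (simp add: ex1_iff_ex_Uniq)
  have "(\<Sum>i<t. ?f i) = (\<Sum>i<t. f i)" by (rule sum.cong) auto
  then have "?Q ?f" using assms by simp
  moreover have "?Q (\<lambda>i. 0)" using V_subspace(1) vs.subspace_0 by auto
  ultimately have "?f = (\<lambda>i. 0)" using uniq by (rule Uniq_D[rotated])
  then show "f i = 0" using fun_cong[of ?f "\<lambda>i. 0" i] \<open>i < t\<close> by simp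
qed

lemma V_independent:
  assumes "i < t"
  shows "(\<Sum>j<i. V j) \<inter> V i = {0}"
proof
  show "(\<Sum>j<i. V j) \<inter> V i \<subseteq> {0}"
  proof
    fix x assume x: "x \<in> (\<Sum>j<i. V j) \<inter> V i"
    then obtain f where f: "\<forall>j\<in>{..<i}. f j \<in> V j" "x = (\<Sum>j<i. f j)"
      using set_sum_alt[of "{..<i}" V] by auto
    define h where "h j = (if j < i then f j else if j = i then - x else 0)" for j
    have "(\<Sum>j<t. h j) = (\<Sum>j<t. if j < i then f j else 0) + (\<Sum>j<t. if j = i then - x else 0)"
      by (subst sum.distrib[symmetric]) (auto simp: h_def intro!: sum.cong)
    also have "(\<Sum>j<t. if j < i then f j else 0) = (\<Sum>j<i. f j)"
      using assms by (subst sum.inter_filter[symmetric]) (auto intro!: sum.cong)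
    also have "(\<Sum>j<t. if j = i then - x else 0) = - x" using assms by simp
    finally have "(\<Sum>j<t. h j) = 0" by (simp only: f(2)[symmetric] right_minus)
    moreover have "\<forall>j<t. h j \<in> V j"
    proof (intro allI impI)
      fix j assume "j < t"
      then show "h j \<in> V j" using f(1) x V_subspace(1)[OF \<open>j < t\<close>]
        by (auto simp: h_def intro: vs.subspace_neg vs.subspace_0)
    qed
    ultimately have "h i = 0" using direct_sum_eq_0 assms by blast
    then show "x \<in> {0}" by (simp add: h_def)
  qed
  have "0 \<in> (\<Sum>j<i. V j)"
    using subspace_sum_sets[of "{..<i}" V] V_subspace(1) assms vs.subspace_0 by simp
  then show "{0} \<subseteq> (\<Sum>j<i. V j) \<inter> V i" using V_subspace(1)[OF assms] vs.subspace_0 by simp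
qed

lemma embed_sum_eq_0:
  assumes "\<forall>i<t. x i \<in> vecs (degree (\<Theta> i))" "(\<Sum>i<t. embed i (x i)) = 0"
  shows "\<forall>i<t. x i = 0"
proof -
  have "coord_row (degree (\<Theta> i)) (x i) s = 0" if "i < t" "s < m" for i s
  proof -
    let ?y = "\<lambda>i. coord_row (degree (\<Theta> i)) (x i) s"
    have "(\<Sum>i<t. orbit i (?y i)) = 0"
      using arg_cong[OF assms(2), of "\<lambda>c. coord_row n c s"]
      by (simp add: coord_row_sum coord_row_mat_apply_lift)
    moreover have "\<forall>i<t. orbit i (?y i) \<in> V i" using cyclic_block.orbit_map_in_V[OF block] by blast
    ultimately have "\<forall>i<t. orbit i (?y i) = 0" by (intro direct_sum_eq_0)
    then have "orbit i (?y i) = orbit i 0"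
      using that(1) module_hom.zero[OF module_hom_mat_apply] by simp
    then show ?thesis
      using inj_onD[OF cyclic_block.inj_on_orbit_map[OF block[OF that(1)]]] coord_row_in_vecs
        zero_in_vecs by blast
  qed
  then show ?thesis using assms(1) coord_rows_eq_0_imp by blast
qed

text \<open>Decompose each coordinate row of \<open>c\<close> along \<open>\<K>\<^sup>n = V\<^sub>1 \<oplus> \<dots> \<oplus> V\<^sub>t\<close> and reassemble
  \<open>c\<close> from its rows.\<close>

lemma vecs_eq_sum_embed:
  assumes c: "c \<in> vecs n"
  obtains e where "\<And>i. i < t \<Longrightarrow> e i \<in> vecs (degree (\<Theta> i))" "c = (\<Sum>i<t. embed i (e i))"
proof -
  have "\<forall>s. \<exists>a. (\<forall>i<t. a i \<in> vecs (degree (\<Theta> i))) \<and> coord_row n c s = (\<Sum>i<t. orbit i (a i))"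
  proof
    fix s
    obtain f where f: "\<forall>i<t. f i \<in> V i" "coord_row n c s = (\<Sum>i<t. f i)"
      using ex1_implies_ex[OF bspec[OF direct_sum coord_row_in_vecs]] by blast
    have "\<forall>i\<in>{..<t}. \<exists>a. a \<in> vecs (degree (\<Theta> i)) \<and> f i = orbit i a"
      using f(1) cyclic_block.V_subset_image_orbit_map[OF block] by blast
    then obtain a where "\<forall>i\<in>{..<t}. a i \<in> vecs (degree (\<Theta> i)) \<and> f i = orbit i (a i)"
      by (rule bchoice[THEN exE])
    then show "\<exists>a. (\<forall>i<t. a i \<in> vecs (degree (\<Theta> i)))
        \<and> coord_row n c s = (\<Sum>i<t. orbit i (a i))"
      using f(2) by (intro exI[of _ a]) auto
  qed
  from choice[OF this] obtain a where a: "\<forall>s. (\<forall>i<t. a s i \<in> vecs (degree (\<Theta> i)))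
      \<and> coord_row n c s = (\<Sum>i<t. orbit i (a s i))"
    by blast
  define e where "e i = (\<Sum>s<m. sc (b s) (emb_vec (a s i)))" for i
  have "e i \<in> vecs (degree (\<Theta> i))" if "i < t" for i
    unfolding e_def using a that
    by (intro vs.subspace_sum[OF subspace_vecs] vs.subspace_scale[OF subspace_vecs] emb_vec_in_vecs) auto
  moreover have "c = (\<Sum>i<t. embed i (e i))"
  proof -
    have "c = (\<Sum>s<m. sc (b s) (\<Sum>i<t. embed i (emb_vec (a s i))))"
      by (subst vecs_eq_sum_coord_rows[OF c]) (simp add: a emb_vec_sum mat_apply_lift_emb_vec)
    also have "\<dots> = (\<Sum>s<m. \<Sum>i<t. embed i (sc (b s) (emb_vec (a s i))))"
      by (simp add: vs.scale_sum_right module_hom.scale[OF module_hom_mat_apply])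
    also have "\<dots> = (\<Sum>i<t. \<Sum>s<m. embed i (sc (b s) (emb_vec (a s i))))"
      by (rule sum.swap)
    also have "\<dots> = (\<Sum>i<t. embed i (e i))"
      by (simp add: e_def module_hom.sum[OF module_hom_mat_apply])
    finally show ?thesis .
  qed
  ultimately show ?thesis using that by blast
qed

lemma poly_endo_embed_block_code:
  assumes i: "i < t" and e: "e \<in> block_code i"
  shows "poly_endo P (\<lambda>c. vecmatT n c (lift_mat M)) (embed i e) = 0"
proof -
  interpret monic_modulus "map_poly emb (\<Theta> i)" P by (rule monic_modulus_block[OF i])
  have deg: "degree (map_poly emb (\<Theta> i)) = degree (\<Theta> i)"
    by (rule cyclic_block.degree_map_poly_\<Theta>[OF block[OF i]])
  have "(P * poly_of_vec (degree (\<Theta> i)) e) mod map_poly emb (\<Theta> i) = 0"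
    using e poly_code_subset_vecs mem_poly_code_iff deg by auto
  moreover have "coeff (0 :: 'l poly) = 0" by (rule ext) (simp add: zero_fun_def)
  ultimately show ?thesis
    using cyclic_block.poly_endo_orbit_map_L[OF block[OF i]] module_hom.zero[OF module_hom_mat_apply]
    by simp
qed

lemma sum_embed_block_codes_subset_kernel: "(\<Sum>i<t. embed i ` block_code i) \<subseteq> kernel_code"
proof
  fix c assume "c \<in> (\<Sum>i<t. embed i ` block_code i)"
  then have "c \<in> {sum a {..<t} |a. \<forall>i\<in>{..<t}. a i \<in> embed i ` block_code i}"
    by (simp only: set_sum_alt[OF finite_lessThan])
  then obtain a where a: "\<forall>i\<in>{..<t}. a i \<in> embed i ` block_code i" "c = (\<Sum>i<t. a i)"
    by blast
  have a_i: "a i \<in> vecs n \<and> poly_endo P (\<lambda>c. vecmatT n c (lift_mat M)) (a i) = 0"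
    if i: "i \<in> {..<t}" for i
  proof -
    obtain e where "e \<in> block_code i" "a i = embed i e" using a(1) i by blast
    then show ?thesis using poly_endo_embed_block_code i by (simp add: mat_apply_in_vecs)
  qed
  then have c: "c \<in> vecs n" unfolding a(2) by (intro vs.subspace_sum[OF subspace_vecs]) blast
  have "poly_endo P (\<lambda>c. vecmatT n c (lift_mat M)) c
      = (\<Sum>i<t. poly_endo P (\<lambda>c. vecmatT n c (lift_mat M)) (a i))"
    unfolding a(2) by (rule module_hom.sum[OF module_hom_poly_endo[OF module_hom_vecmatT]])
  also have "\<dots> = 0" using a_i by simp
  finally show "c \<in> kernel_code" using c by (simp add: vecmatT_poly_mat)
qed

lemma kernel_subset_sum_embed_block_codes: "kernel_code \<subseteq> (\<Sum>i<t. embed i ` block_code i)"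
proof
  fix c assume "c \<in> kernel_code"
  then have c: "c \<in> vecs n" "vecmatT n c (poly_mat n P (lift_mat M)) = 0" by simp_all
  then have c: "c \<in> vecs n" "poly_endo P (\<lambda>c. vecmatT n c (lift_mat M)) c = 0"
    by (simp_all add: vecmatT_poly_mat)
  obtain e where e: "\<And>i. i < t \<Longrightarrow> e i \<in> vecs (degree (\<Theta> i))" "c = (\<Sum>i<t. embed i (e i))"
    using vecs_eq_sum_embed[OF c(1)] by blast
  define x where "x i = coeff ((P * poly_of_vec (degree (\<Theta> i)) (e i)) mod map_poly emb (\<Theta> i))" for i
  have x_vecs: "x i \<in> vecs (degree (\<Theta> i))" if "i < t" for i
    using coeff_mod_in_vecs[OF monic_modulus.T_nonzero[OF monic_modulus_block[OF that]]]
      cyclic_block.degree_map_poly_\<Theta>[OF block[OF that]] by (simp add: x_def)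
  have "poly_endo P (\<lambda>c. vecmatT n c (lift_mat M)) c
      = (\<Sum>i<t. poly_endo P (\<lambda>c. vecmatT n c (lift_mat M)) (embed i (e i)))"
    unfolding e(2) by (rule module_hom.sum[OF module_hom_poly_endo[OF module_hom_vecmatT]])
  also have "\<dots> = (\<Sum>i<t. embed i (x i))"
    using cyclic_block.poly_endo_orbit_map_L[OF block] by (intro sum.cong) (simp_all add: x_def)
  finally have "(\<Sum>i<t. embed i (x i)) = 0" using c(2) by simp
  then have x0: "\<forall>i<t. x i = 0" by (intro embed_sum_eq_0) (use x_vecs in blast)
  have "e i \<in> block_code i" if i: "i < t" for i
  proof -
    have "coeff ((P * poly_of_vec (degree (\<Theta> i)) (e i)) mod map_poly emb (\<Theta> i)) = coeff 0"
      using x0 i by (simp add: x_def fun_eq_iff zero_fun_def)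
    then have "(P * poly_of_vec (degree (\<Theta> i)) (e i)) mod map_poly emb (\<Theta> i) = 0"
      by (simp only: coeff_inject)
    then show ?thesis
      using monic_modulus.mem_poly_code_iff[OF monic_modulus_block[OF i]] e(1)[OF i]
        cyclic_block.degree_map_poly_\<Theta>[OF block[OF i]] by simp
  qed
  then have "\<forall>i\<in>{..<t}. embed i (e i) \<in> embed i ` block_code i" by blast
  then have "(\<Sum>i<t. embed i (e i)) \<in> {sum a {..<t} |a. \<forall>i\<in>{..<t}. a i \<in> embed i ` block_code i}"
    by blast
  then show "c \<in> (\<Sum>i<t. embed i ` block_code i)"
    unfolding e(2) by (simp only: set_sum_alt[OF finite_lessThan])
qed

lemma kernel_code_eq_sum: "kernel_code = (\<Sum>i<t. embed i ` block_code i)"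
  using sum_embed_block_codes_subset_kernel kernel_subset_sum_embed_block_codes by (rule antisym[rotated])

lemma embed_block_code:
  assumes i: "i < t"
  shows "vs.subspace (embed i ` block_code i)" "embed i ` block_code i \<subseteq> rows_in n (V i)"
    and "vs.dim (embed i ` block_code i) = vs.dim (block_code i)"
    and "Mr emb b m n (embed i ` block_code i) r = Mr emb b m (degree (\<Theta> i)) (block_code i) r"
proof -
  interpret monic_modulus "map_poly emb (\<Theta> i)" P by (rule monic_modulus_block[OF i])
  have deg: "degree (map_poly emb (\<Theta> i)) = degree (\<Theta> i)"
    by (rule cyclic_block.degree_map_poly_\<Theta>[OF block[OF i]])
  have code: "vs.subspace (block_code i)" "block_code i \<subseteq> vecs (degree (\<Theta> i))"
    using subspace_poly_code poly_code_subset_vecs deg by simp_all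
  show "vs.subspace (embed i ` block_code i)"
    by (rule module_hom.subspace_image[OF module_hom_mat_apply code(1)])
  show "embed i ` block_code i \<subseteq> rows_in n (V i)"
    using cyclic_block.orbit_map_L_in_rows_in[OF block[OF i]] by blast
  show "vs.dim (embed i ` block_code i) = vs.dim (block_code i)"
    by (rule vs.dim_image_inj_on[OF code(1) finitely_spanned_subset_vecs[OF code(2)]
          linear_on_module_hom[OF module_hom_mat_apply]
          inj_on_subset[OF cyclic_block.inj_on_orbit_map_L[OF block[OF i]] code(2)]])
  show "Mr emb b m n (embed i ` block_code i) r = Mr emb b m (degree (\<Theta> i)) (block_code i) r"
    by (rule Mr_image_mat_apply_lift[OF cyclic_block.inj_on_orbit_map[OF block[OF i]] code])
qed

abbreviation nontrivial_blocks :: "nat set" where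
  "nontrivial_blocks \<equiv> {i. i < t \<and> gcd P (map_poly emb (\<Theta> i)) \<noteq> 1}"

abbreviation block_dim :: "nat \<Rightarrow> nat" where
  "block_dim i \<equiv> vs.dim (block_code i)"

lemma block_dim_eq: "i < t \<Longrightarrow> block_dim i = degree (gcd P (map_poly emb (\<Theta> i)))"
  using monic_modulus.dim_poly_code[OF monic_modulus_block] by blast

lemma Mr_block_code_le:
  assumes i: "i < t" and r: "r \<le> block_dim i"
  shows "Mr emb b m (degree (\<Theta> i)) (block_code i) r
    \<le> degree (\<Theta> i) - degree (gcd P (map_poly emb (\<Theta> i))) + r"
proof -
  have deg: "degree (map_poly emb (\<Theta> i)) = degree (\<Theta> i)"
    by (rule cyclic_block.degree_map_poly_\<Theta>[OF block[OF i]])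
  have "r \<le> degree (gcd P (map_poly emb (\<Theta> i)))" using r block_dim_eq[OF i] by simp
  from Mr_poly_code_le[OF extension_basis_axioms monic_modulus.monic[OF monic_modulus_block[OF i]] this]
  show ?thesis unfolding deg .
qed

lemma block_dim_eq_0:
  assumes "i \<in> {..<t} - nontrivial_blocks"
  shows "block_dim i = 0"
proof -
  have i: "i < t" and "gcd P (map_poly emb (\<Theta> i)) = 1" using assms by auto
  then show ?thesis using block_dim_eq[OF i] by simp
qed

lemma nontrivial_blocks_subset: "nontrivial_blocks \<subseteq> {..<t}"
  by auto

lemma dim_kernel_code: "vs.dim kernel_code = (\<Sum>i\<in>nontrivial_blocks. block_dim i)"
proof -
  have "vs.dim kernel_code = (\<Sum>i<t. vs.dim (embed i ` block_code i))"
    unfolding kernel_code_eq_sum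
    by (rule dim_partial_sum[where n = n and t = t and U = V and A = "\<lambda>i. embed i ` block_code i",
          OF V_subspace V_independent embed_block_code(1,2) order_refl])
  also have "\<dots> = (\<Sum>i<t. block_dim i)" by (rule sum.cong) (simp_all add: embed_block_code(3))
  also have "\<dots> = (\<Sum>i\<in>nontrivial_blocks. block_dim i)"
    by (rule sum.mono_neutral_right[OF finite_lessThan nontrivial_blocks_subset])
      (intro ballI block_dim_eq_0)
  finally show ?thesis .
qed

lemma Mr_kernel_code:
  assumes "r \<le> vs.dim kernel_code"
  shows "compositions nontrivial_blocks block_dim r \<noteq> {}"
    and "Mr emb b m n kernel_code r
      = Min ((\<lambda>rr. \<Sum>i\<in>nontrivial_blocks. Mr emb b m (degree (\<Theta> i)) (block_code i) (rr i))
          ` compositions nontrivial_blocks block_dim r)"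
proof -
  let ?A = "\<lambda>i. embed i ` block_code i"
  let ?C = "compositions nontrivial_blocks block_dim r"
  have r: "r \<le> vs.dim (\<Sum>i<t. ?A i)" using assms by (simp add: kernel_code_eq_sum)
  have sum_eq: "compositions {..<t} (\<lambda>i. vs.dim (?A i)) r \<noteq> {}"
    "Mr emb b m n kernel_code r
      = Min ((\<lambda>rr. \<Sum>i<t. Mr emb b m n (?A i) (rr i)) ` compositions {..<t} (\<lambda>i. vs.dim (?A i)) r)"
    unfolding kernel_code_eq_sum
    by (rule Mr_sum_eq_Min_compositions[where n = n and t = t and U = V and A = ?A];
        use V_subspace V_independent embed_block_code(1,2) r in auto)+
  have C: "compositions {..<t} (\<lambda>i. vs.dim (?A i)) r = ?C"
  proof -
    have "compositions {..<t} (\<lambda>i. vs.dim (?A i)) r = compositions {..<t} block_dim r"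
      by (rule compositions_cong) (simp add: embed_block_code(3))
    also have "\<dots> = ?C"
      by (rule compositions_superset[OF nontrivial_blocks_subset finite_lessThan])
        (intro ballI block_dim_eq_0)
    finally show ?thesis .
  qed
  show "?C \<noteq> {}" using sum_eq(1) C by simp
  have "(\<Sum>i<t. Mr emb b m n (?A i) (rr i))
      = (\<Sum>i\<in>nontrivial_blocks. Mr emb b m (degree (\<Theta> i)) (block_code i) (rr i))" if "rr \<in> ?C" for rr
  proof -
    have "\<forall>i. i \<notin> nontrivial_blocks \<longrightarrow> rr i = 0" using that by (simp add: compositions_def)
    then show ?thesis by (simp add: embed_block_code(4)) (intro sum.mono_neutral_right; auto)
  qed
  then show "Mr emb b m n kernel_code r
      = Min ((\<lambda>rr. \<Sum>i\<in>nontrivial_blocks. Mr emb b m (degree (\<Theta> i)) (block_code i) (rr i)) ` ?C)"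
    using sum_eq(2) C by (simp cong: image_cong)
qed

lemma block_dim_pos:
  assumes "i \<in> nontrivial_blocks"
  shows "0 < block_dim i"
proof -
  have i: "i < t" and ne: "gcd P (map_poly emb (\<Theta> i)) \<noteq> 1" using assms by auto
  have "map_poly emb (\<Theta> i) \<noteq> 0" by (rule monic_modulus.T_nonzero[OF monic_modulus_block[OF i]])
  then have nz: "gcd P (map_poly emb (\<Theta> i)) \<noteq> 0" by simp
  have "degree (gcd P (map_poly emb (\<Theta> i))) \<noteq> 0"
  proof
    assume "degree (gcd P (map_poly emb (\<Theta> i))) = 0"
    then have "is_unit (gcd P (map_poly emb (\<Theta> i)))" using is_unit_iff_degree[OF nz] by simp
    then have "normalize (gcd P (map_poly emb (\<Theta> i))) = 1" by (rule is_unit_normalize)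
    then show False using ne by simp
  qed
  then show ?thesis using block_dim_eq[OF i] by simp
qed

lemma block_dim_le_degree: "i < t \<Longrightarrow> block_dim i \<le> degree (\<Theta> i)"
  using dvd_imp_degree_le[OF gcd_dvd2 monic_modulus.T_nonzero[OF monic_modulus_block]]
    block_dim_eq cyclic_block.degree_map_poly_\<Theta>[OF block] by metis

lemma Min_Mr_kernel_code_le:
  assumes "r \<le> vs.dim kernel_code"
  shows "Min ((\<lambda>rr. \<Sum>i\<in>nontrivial_blocks. Mr emb b m (degree (\<Theta> i)) (block_code i) (rr i))
        ` compositions nontrivial_blocks block_dim r)
    \<le> Min ((\<lambda>rr. \<Sum>i\<in>{i \<in> nontrivial_blocks. rr i \<noteq> 0}.
          degree (\<Theta> i) - degree (gcd P (map_poly emb (\<Theta> i)))) ` compositions nontrivial_blocks block_dim r)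
      + r"
  by (rule Min_compositions_le[where f = "\<lambda>i. Mr emb b m (degree (\<Theta> i)) (block_code i)"])
    (use Mr_kernel_code(1)[OF assms] Mr_block_code_le in auto)

lemma Mr_kernel_code_1:
  assumes "1 \<le> vs.dim kernel_code"
  shows "Mr emb b m n kernel_code 1
    = Min ((\<lambda>i. Mr emb b m (degree (\<Theta> i)) (block_code i) 1) ` nontrivial_blocks)"
  unfolding Mr_kernel_code(2)[OF assms]
  by (rule Min_compositions_one) (auto simp: Suc_le_eq intro: block_dim_pos)

lemma Mr_kernel_code_dim:
  "Mr emb b m n kernel_code (vs.dim kernel_code)
    = (\<Sum>i\<in>nontrivial_blocks. Mr emb b m (degree (\<Theta> i)) (block_code i) (block_dim i))"
  unfolding Mr_kernel_code(2)[OF order_refl] unfolding dim_kernel_code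
  by (rule Min_compositions_total) auto

lemma sum_Mr_block_code_le:
  "(\<Sum>i\<in>nontrivial_blocks. Mr emb b m (degree (\<Theta> i)) (block_code i) (block_dim i))
    \<le> (\<Sum>i\<in>nontrivial_blocks. degree (\<Theta> i))"
proof (rule sum_mono)
  fix i assume "i \<in> nontrivial_blocks"
  then have i: "i < t" by simp
  show "Mr emb b m (degree (\<Theta> i)) (block_code i) (block_dim i) \<le> degree (\<Theta> i)"
    using Mr_block_code_le[OF i order_refl] block_dim_eq[OF i] block_dim_le_degree[OF i] by simp
qed

end

theorem theorem3:
  fixes emb :: "'k::field \<Rightarrow> 'l::field_gcd"
    and b :: "nat \<Rightarrow> 'l" and m n t :: nat
    and M :: "nat \<Rightarrow> nat \<Rightarrow> 'k"
    and V :: "nat \<Rightarrow> (nat \<Rightarrow> 'k) set"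
    and \<Theta> :: "nat \<Rightarrow> 'k poly"
    and P :: "'l poly"
  assumes emb: "field_emb emb"
    and basis: "is_K_basis emb b m"
    and n_pos: "n \<ge> 1" and mn: "m \<ge> n"
    and V_sub: "\<forall>i<t. module.subspace sc (V i) \<and> V i \<subseteq> vecs n"
    and dsum: "\<forall>v\<in>vecs n. \<exists>!f. (\<forall>i. i \<ge> t \<longrightarrow> f i = 0) \<and> (\<forall>i<t. f i \<in> V i)
                                \<and> v = (\<Sum>i<t. f i)"
    and inv: "\<forall>i<t. (\<lambda>v. vecmatT n v M) ` V i \<subseteq> V i"
    and cyc: "\<forall>i<t. cyclic_endo (V i) (\<lambda>v. vecmatT n v M)"
    and minp: "\<forall>i<t. is_min_poly (V i) (\<lambda>v. vecmatT n v M) (\<Theta> i)"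
  defines "G \<equiv> \<lambda>i. gcd P (map_poly emb (\<Theta> i))"
    and "CC \<equiv> {c \<in> vecs n. vecmatT n c (poly_mat n P (\<lambda>i j. emb (M i j))) = 0}"
    and "Ci \<equiv> \<lambda>i. poly_code (map_poly emb (\<Theta> i)) (map_poly emb (\<Theta> i) div gcd P (map_poly emb (\<Theta> i)))"
    and "\<Lambda> \<equiv> {i. i < t \<and> gcd P (map_poly emb (\<Theta> i)) \<noteq> 1}"
    and "kk \<equiv> \<lambda>i. vector_space.dim (sc :: 'l \<Rightarrow> _) (poly_code (map_poly emb (\<Theta> i)) (map_poly emb (\<Theta> i) div gcd P (map_poly emb (\<Theta> i))))"
    and "k \<equiv> vector_space.dim (sc :: 'l \<Rightarrow> _) {c \<in> vecs n. vecmatT n c (poly_mat n P (\<lambda>i j. emb (M i j))) = 0}"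
    and "d \<equiv> \<lambda>i. degree (\<Theta> i)"
  shows "(\<forall>i<t. kk i = degree (G i))
    \<and> (\<forall>i<t. \<forall>r\<in>{1..kk i}. Mr emb b m (d i) (Ci i) r \<le> d i - degree (G i) + r)
    \<and> k = (\<Sum>i\<in>\<Lambda>. degree (G i))
    \<and> (\<forall>r\<in>{1..k}.
          Mr emb b m n CC r
            = Min ((\<lambda>rr. \<Sum>i\<in>\<Lambda>. Mr emb b m (d i) (Ci i) (rr i)) ` compositions \<Lambda> kk r)
        \<and> Min ((\<lambda>rr. \<Sum>i\<in>\<Lambda>. Mr emb b m (d i) (Ci i) (rr i)) ` compositions \<Lambda> kk r)
            \<le> Min ((\<lambda>rr. \<Sum>i\<in>{i\<in>\<Lambda>. rr i \<noteq> 0}. d i - degree (G i)) ` compositions \<Lambda> kk r) + r)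
    \<and> (k \<ge> 1 \<longrightarrow> Mr emb b m n CC 1 = Min ((\<lambda>i. Mr emb b m (d i) (Ci i) 1) ` \<Lambda>))
    \<and> Mr emb b m n CC k = (\<Sum>i\<in>\<Lambda>. Mr emb b m (d i) (Ci i) (kk i))
    \<and> (\<Sum>i\<in>\<Lambda>. Mr emb b m (d i) (Ci i) (kk i)) \<le> (\<Sum>i\<in>\<Lambda>. d i)"
proof -
  interpret extension_basis emb b m by (rule extension_basis.intro[OF emb basis])
  have "\<forall>i\<in>{..<t}. \<exists>w. w \<in> V i
      \<and> vs.span ((\<lambda>j. ((\<lambda>v. vecmatT n v M) ^^ j) w) ` {..<vs.dim (V i)}) = V i"
    using cyc by (auto simp: cyclic_endo_def Let_def)
  then obtain w where w: "\<forall>i\<in>{..<t}. w i \<in> V i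
      \<and> vs.span ((\<lambda>j. ((\<lambda>v. vecmatT n v M) ^^ j) (w i)) ` {..<vs.dim (V i)}) = V i"
    by (rule bchoice[THEN exE])
  have "cyclic_block emb b m n M (V i) (\<Theta> i) (w i)" if "i < t" for i
    using V_sub inv w minp that
    by (intro cyclic_block.intro extension_basis_axioms cyclic_block_axioms.intro) auto
  then interpret block_decomposition emb b m n t M V \<Theta> w P
    using dsum by (intro block_decomposition.intro extension_basis_axioms block_decomposition_axioms.intro)
  have k: "k = (\<Sum>i\<in>nontrivial_blocks. degree (gcd P (map_poly emb (\<Theta> i))))"
    unfolding k_def dim_kernel_code by (rule sum.cong) (simp_all add: block_dim_eq)
  show ?thesis
    unfolding G_def CC_def Ci_def \<Lambda>_def kk_def d_def
    using block_dim_eq Mr_block_code_le k Mr_kernel_code(2)[folded k_def]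
      Min_Mr_kernel_code_le[folded k_def] Mr_kernel_code_1[folded k_def]
      Mr_kernel_code_dim[folded k_def] sum_Mr_block_code_le
    by (intro conjI ballI allI impI) simp_all
qed

end
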